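(* For all $\lambda,\mu\in\mathbb C$ and $k\in\frac12\mathbb Z_{\ge0}$, the space $\mathcal D^k_{\lambda\mu}$ is isomorphic to the corresponding space of symbols $\bigoplus_{i=0}^{2k}\operatorname{gr}^{i/2}\mathcal D_{\lambda\mu}$ as a module over the affine Lie superalgebra $\mathrm{Aff}(2|2)$.
   Context: $C^\infty(S^{1|2})$ consists of $f=f_0(x)+\xi_1f_1(x)+\xi_2f_2(x)+\xi_1\xi_2f_{12}(x)$ with smooth complex-valued coefficients on the circle and odd Grassmann variables $\xi_1,\xi_2$; parity $p(x)=0,p(\xi_i)=1$; $f'=\partial_xf$. $\overline D_i=\partial_{\xi_i}-\xi_i\partial_x$. For homogeneous $f$, $X_f=f\partial_x-(-1)^{p(f)}\tfrac12(\overline D_1(f)\overline D_1+\overline D_2(f)\overline D_2)$; $\mathcal K(2)$ is the Lie superalgebra of all such $X_f$; $\mathrm{Aff}(2|2)$ is its subalgebra spanned by $X_f$ for $f\in\{1,x,\xi_1\xi_2,\xi_1,\xi_2\}$. $\mathcal F_\lambda$ is $C^\infty(S^{1|2})$ with action $L^\lambda_{X_f}=X_f+\lambda f'$. $\mathcal D_{\lambda\mu}$: linear differential operators $\mathcal F_\lambda\to\mathcal F_\mu$ with action $\mathcal L_{X_f}(A)=L^\mu_{X_f}\circ A-(-1)^{p(f)p(A)}A\circ L^\lambda_{X_f}$; each is a finite sum $\sum a_{\ell,m,n}\partial_x^\ell\overline D_1^m\overline D_2^n$, $m,n\in\{0,1\}$. For $k\in\frac12\mathbb Z_{\ge0}$,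 $\mathcal D^k_{\lambda\mu}$ consists of such sums with $\ell+\frac m2+\frac n2\le k$; it is $\mathcal K(2)$-stable, and $\operatorname{gr}^k\mathcal D_{\lambda\mu}=\mathcal D^k_{\lambda\mu}/\mathcal D^{k-1/2}_{\lambda\mu}$ (with $\mathcal D^{-1/2}=0$) carries the induced action.
   Formalization: The supercircle $S^{1|2}$ is replaced by the superline: x ranges over the whole real line, and the coefficients $f_0,f_1,f_2,f_{12}$ are smooth complex-valued functions on it, without periodicity. The statement above fails without it. *)

theory Defs
  imports "HOL-Analysis.Analysis" "HOL-Library.Function_Algebras"
begin

text \<open>A superfunction f = f00 + xi1 f10 + xi2 f01 + xi1 xi2 f11 is represented by
  its coefficient map: the index (a,b) :: bool \<times> bool stands for xi1^a xi2^b.\<close>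

type_synonym sf = "bool \<times> bool \<Rightarrow> real \<Rightarrow> complex"
type_synonym sop = "sf \<Rightarrow> sf"

definition smooth_fun :: "(real \<Rightarrow> complex) \<Rightarrow> bool" where
  "smooth_fun g \<longleftrightarrow> (\<exists>d. d 0 = g \<and>
      (\<forall>k t. (d k has_vector_derivative d (Suc k) t) (at t)))"

definition smooth_sf :: "sf \<Rightarrow> bool" where
  "smooth_sf F \<longleftrightarrow> (\<forall>c. smooth_fun (F c))"

definition sf_dx :: "sf \<Rightarrow> sf" where
  "sf_dx F = (\<lambda>c t. vector_derivative (F c) (at t))"

definition gmul :: "sf \<Rightarrow> sf \<Rightarrow> sf" where
  "gmul F G = (\<lambda>c t. case c of
      (False, False) \<Rightarrow> F (False,False) t * G (False,False) t
    | (True, False) \<Rightarrow> F (True,False) t * G (False,False) t + F (False,False) t * G (True,False) t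
    | (False, True) \<Rightarrow> F (False,True) t * G (False,False) t + F (False,False) t * G (False,True) t
    | (True, True) \<Rightarrow> F (True,True) t * G (False,False) t + F (False,False) t * G (True,True) t
                     + F (True,False) t * G (False,True) t - F (False,True) t * G (True,False) t)"

definition cmul :: "complex \<Rightarrow> sf \<Rightarrow> sf" where
  "cmul a F = (\<lambda>c t. a * F c t)"

definition sf_one :: sf where
  "sf_one = (\<lambda>c t. if c = (False,False) then 1 else 0)"

definition sf_x :: sf where
  "sf_x = (\<lambda>c t. if c = (False,False) then complex_of_real t else 0)"

definition sf_xi1 :: sf where
  "sf_xi1 = (\<lambda>c t. if c = (True,False) then 1 else 0)"

definition sf_xi2 :: sf where
  "sf_xi2 = (\<lambda>c t. if c = (False,True) then 1 else 0)"

text \<open>left derivatives partial_xi1, partial_xi2\<close>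
definition dxi1 :: "sf \<Rightarrow> sf" where
  "dxi1 F = (\<lambda>c t. case c of (False,False) \<Rightarrow> F (True,False) t
                           | (False,True) \<Rightarrow> F (True,True) t
                           | _ \<Rightarrow> 0)"

definition dxi2 :: "sf \<Rightarrow> sf" where
  "dxi2 F = (\<lambda>c t. case c of (False,False) \<Rightarrow> F (False,True) t
                           | (True,False) \<Rightarrow> - F (True,True) t
                           | _ \<Rightarrow> 0)"

definition Dbar1 :: "sf \<Rightarrow> sf" where
  "Dbar1 F = dxi1 F - gmul sf_xi1 (sf_dx F)"

definition Dbar2 :: "sf \<Rightarrow> sf" where
  "Dbar2 F = dxi2 F - gmul sf_xi2 (sf_dx F)"

definition sf_ev :: "sf \<Rightarrow> sf" where
  "sf_ev F = (\<lambda>c t. if fst c = snd c then F c t else 0)"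

definition sf_od :: "sf \<Rightarrow> sf" where
  "sf_od F = (\<lambda>c t. if fst c \<noteq> snd c then F c t else 0)"

text \<open>The vector field X_f for f homogeneous of parity p (True = odd):
  X_f = f dx - (-1)^p 1/2 (Dbar1(f) Dbar1 + Dbar2(f) Dbar2).\<close>
definition Xvec :: "bool \<Rightarrow> sf \<Rightarrow> sf \<Rightarrow> sf" where
  "Xvec p f F = gmul f (sf_dx F)
      + cmul (if p then 1/2 else -1/2) (gmul (Dbar1 f) (Dbar1 F) + gmul (Dbar2 f) (Dbar2 F))"

definition Lie :: "bool \<Rightarrow> complex \<Rightarrow> sf \<Rightarrow> sf \<Rightarrow> sf" where
  "Lie p lam f F = Xvec p f F + cmul lam (gmul (sf_dx f) F)"

text \<open>Operators are considered on smooth superfunctions only (value 0 elsewhere).\<close>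
definition restr :: "sop \<Rightarrow> sop" where
  "restr A = (\<lambda>F. if smooth_sf F then A F else 0)"

definition op_ev :: "sop \<Rightarrow> sop" where
  "op_ev A = (\<lambda>F. sf_ev (A (sf_ev F)) + sf_od (A (sf_od F)))"

definition op_od :: "sop \<Rightarrow> sop" where
  "op_od A = (\<lambda>F. sf_od (A (sf_ev F)) + sf_ev (A (sf_od F)))"

definition op_even :: "sop \<Rightarrow> bool" where
  "op_even A \<longleftrightarrow> (\<forall>F. smooth_sf F \<longrightarrow> A F = op_ev A F)"

definition op_odd :: "sop \<Rightarrow> bool" where
  "op_odd A \<longleftrightarrow> (\<forall>F. smooth_sf F \<longrightarrow> A F = op_od A F)"

definition opscale :: "complex \<Rightarrow> sop \<Rightarrow> sop" where
  "opscale a A = (\<lambda>F. cmul a (A F))"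

text \<open>Action of X_f on D_{lambda mu}:
  L_{X_f}(A) = L^mu_{X_f} o A - (-1)^{p(f) p(A)} A o L^lambda_{X_f},
  extended by linearity to non-homogeneous f and A.\<close>
definition act :: "complex \<Rightarrow> complex \<Rightarrow> sf \<Rightarrow> sop \<Rightarrow> sop" where
  "act lam mu f A = restr (\<lambda>F.
       Lie False mu (sf_ev f) (A F) - A (Lie False lam (sf_ev f) F)
     + Lie True mu (sf_od f) (op_ev A F) - op_ev A (Lie True lam (sf_od f) F)
     + Lie True mu (sf_od f) (op_od A F) + op_od A (Lie True lam (sf_od f) F))"

text \<open>Aff(2|2) = span of X_f, f in {1, x, xi1 xi2, xi1, xi2}; identified with the
  set of generating functions f.\<close>
definition Aff22 :: "sf set" where
  "Aff22 = {cmul c1 sf_one + cmul c2 sf_x + cmul c3 (gmul sf_xi1 sf_xi2)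
            + cmul c4 sf_xi1 + cmul c5 sf_xi2 | c1 c2 c3 c4 c5. True}"

text \<open>D^{j/2}: operators sum a_{l,m,n} dx^l Dbar1^m Dbar2^n with l + m/2 + n/2 \<le> j/2,
  m, n \<in> {0,1}, smooth coefficients.\<close>
definition Dord :: "nat \<Rightarrow> sop set" where
  "Dord j = {restr (\<lambda>F. \<Sum>l\<le>j. \<Sum>m<2. \<Sum>n<2.
               if 2*l + m + n \<le> j
               then gmul (a l m n) ((sf_dx ^^ l) ((Dbar1 ^^ m) ((Dbar2 ^^ n) F)))
               else 0)
            | a. \<forall>l m n. smooth_sf (a l m n)}"

text \<open>D^{(j-1)/2}, with D^{-1/2} = 0\<close>
definition Dlow :: "nat \<Rightarrow> sop set" where
  "Dlow j = (if j = 0 then {0} else Dord (j - 1))"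

text \<open>gr^{j/2} D = D^{j/2} / D^{(j-1)/2}: its elements are cosets\<close>
definition grcls :: "nat \<Rightarrow> sop \<Rightarrow> sop set" where
  "grcls j A = {B \<in> Dord j. B - A \<in> Dlow j}"

definition grspace :: "nat \<Rightarrow> sop set set" where
  "grspace j = grcls j ` Dord j"

text \<open>The space of symbols: direct sum over i = 0..n of gr^{i/2} D (n = 2k).\<close>
definition symspace :: "nat \<Rightarrow> (nat \<Rightarrow> sop set) set" where
  "symspace n = {g. (\<forall>i\<le>n. g i \<in> grspace i) \<and> (\<forall>i>n. g i = {})}"

text \<open>Phi is an (even) isomorphism of Aff(2|2)-modules from D^{n/2} onto the symbol space.
  Linear structure, action and parity on cosets are the induced ones.\<close>
definition aff_module_iso :: "complex \<Rightarrow> complex \<Rightarrow> nat \<Rightarrow> (sop \<Rightarrow> nat \<Rightarrow> sop set) \<Rightarrow> bool" where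
  "aff_module_iso lam mu n \<Phi> \<longleftrightarrow>
     bij_betw \<Phi> (Dord n) (symspace n)
   \<and> (\<forall>A\<in>Dord n. \<forall>B\<in>Dord n. \<forall>i\<le>n.
          \<Phi> (A + B) i = {a + b | a b. a \<in> \<Phi> A i \<and> b \<in> \<Phi> B i})
   \<and> (\<forall>c A. c \<noteq> 0 \<longrightarrow> A \<in> Dord n \<longrightarrow> (\<forall>i\<le>n. \<Phi> (opscale c A) i = opscale c ` \<Phi> A i))
   \<and> (\<forall>f\<in>Aff22. \<forall>A\<in>Dord n. \<forall>i\<le>n. \<forall>B\<in>\<Phi> A i. act lam mu f B \<in> \<Phi> (act lam mu f A) i)
   \<and> (\<forall>A\<in>Dord n. \<forall>i\<le>n. (op_even A \<longrightarrow> (\<exists>B\<in>\<Phi> A i. op_even B))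
                        \<and> (op_odd A \<longrightarrow> (\<exists>B\<in>\<Phi> A i. op_odd B)))"

end

theory Submission
  imports Defs
begin

text \<open>An operator in \<open>D\<^sup>n\<^sup>/\<^sup>2\<close> is a sum \<open>\<Sum> a\<^sub>l\<^sub>m\<^sub>n \<partial>\<^sub>x\<^sup>l D\<^sub>1\<^sup>m D\<^sub>2\<^sup>n\<close>;
  grouping its terms by the weight \<open>2l + m + n\<close> writes it as a sum of homogeneous operators of
  weights \<open>0, \<dots>, n\<close>. This decomposition is unique: the coefficients of an operator are recovered by
  applying it to \<open>(x - t\<^sub>0)\<^sup>K\<close> placed in one component and evaluating at \<open>t\<^sub>0\<close>.
  The affine generators preserve homogeneity: the even ones \<open>1, x, \<xi>\<^sub>1\<xi>\<^sub>2\<close> commute with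
  \<open>\<partial>\<^sub>x\<close> and \<open>D\<^sub>i\<close> up to scalars and a rotation of \<open>(D\<^sub>1, D\<^sub>2)\<close>, and the odd ones
  \<open>\<xi>\<^sub>1, \<xi>\<^sub>2\<close> supercommute with them. Hence the homogeneous part of weight \<open>i\<close>, as a
  representative of its class in \<open>gr\<^sup>i\<^sup>/\<^sup>2\<close>, gives an equivariant isomorphism onto the symbols;
  it preserves parity because the even and odd parts of an operator decompose separately.\<close>

section \<open>Smooth complex functions of a real variable\<close>

definition vderiv :: "(real \<Rightarrow> complex) \<Rightarrow> real \<Rightarrow> complex" where
  "vderiv g = (\<lambda>t. vector_derivative g (at t))"

fun has_derivs :: "nat \<Rightarrow> (real \<Rightarrow> complex) \<Rightarrow> bool" where
  "has_derivs 0 g = True"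
| "has_derivs (Suc k) g \<longleftrightarrow> (\<forall>t. (g has_vector_derivative vderiv g t) (at t)) \<and> has_derivs k (vderiv g)"

lemma has_derivs_Suc_imp: "has_derivs (Suc k) g \<Longrightarrow> has_derivs k g"
  by (induction k arbitrary: g) auto

lemma vderiv_eqI: "(\<And>t. (g has_vector_derivative g' t) (at t)) \<Longrightarrow> vderiv g = g'"
  by (auto simp: vderiv_def intro!: ext vector_derivative_at)

lemma has_derivs_add: "has_derivs k f \<Longrightarrow> has_derivs k g \<Longrightarrow> has_derivs k (\<lambda>t. f t + g t)"
proof (induction k arbitrary: f g)
  case (Suc k)
  have d: "\<And>t. ((\<lambda>t. f t + g t) has_vector_derivative vderiv f t + vderiv g t) (at t)"
    using Suc.prems by (auto intro!: has_vector_derivative_add)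
  thus ?case using Suc vderiv_eqI[OF d] by auto
qed simp

lemma has_derivs_mult: "has_derivs k f \<Longrightarrow> has_derivs k g \<Longrightarrow> has_derivs k (\<lambda>t. f t * g t)"
proof (induction k arbitrary: f g)
  case (Suc k)
  have d: "\<And>t. ((\<lambda>t. f t * g t) has_vector_derivative f t * vderiv g t + vderiv f t * g t) (at t)"
    using Suc.prems by (auto intro!: has_vector_derivative_mult)
  have "has_derivs k (\<lambda>t. f t * vderiv g t)" "has_derivs k (\<lambda>t. vderiv f t * g t)"
    using Suc.IH has_derivs_Suc_imp Suc.prems by auto
  thus ?case using d vderiv_eqI[OF d] by (auto intro: has_derivs_add)
qed simp

lemma has_derivs_const: "has_derivs k (\<lambda>t. c)"
proof (induction k arbitrary: c)
  case (Suc k)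
  have "vderiv (\<lambda>t. c) = (\<lambda>t. 0)" by (rule vderiv_eqI) simp
  thus ?case using Suc by simp
qed simp

lemma has_derivs_of_real: "has_derivs k (\<lambda>t. complex_of_real t)"
proof (cases k)
  case (Suc k')
  have d: "\<And>t. ((\<lambda>t. complex_of_real t) has_vector_derivative 1) (at t)"
    using has_vector_derivative_of_real[of "\<lambda>x. x" 1] by (auto intro: DERIV_ident)
  thus ?thesis using Suc vderiv_eqI[OF d] by (simp add: has_derivs_const)
qed simp

lemma has_derivs_funpow:
  "has_derivs (Suc j) g \<Longrightarrow> ((vderiv^^j) g has_vector_derivative (vderiv^^Suc j) g t) (at t)"
proof (induction j arbitrary: g)
  case (Suc j)
  from Suc.IH[of "vderiv g"] Suc.prems show ?case by (simp only: funpow_Suc_right o_def) simp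
qed simp

lemma smooth_fun_iff_has_derivs: "smooth_fun g \<longleftrightarrow> (\<forall>k. has_derivs k g)"
proof
  assume "smooth_fun g"
  then obtain d where d0: "d 0 = g" and dd: "\<And>k t. (d k has_vector_derivative d (Suc k) t) (at t)"
    unfolding smooth_fun_def by blast
  have "has_derivs k (d j)" for k j
    by (induction k arbitrary: j) (auto simp: dd vderiv_eqI[OF dd])
  thus "\<forall>k. has_derivs k g" using d0 by metis
next
  assume "\<forall>k. has_derivs k g"
  hence "\<And>k t. ((vderiv^^k) g has_vector_derivative (vderiv^^Suc k) g t) (at t)"
    using has_derivs_funpow by blast
  thus "smooth_fun g" unfolding smooth_fun_def
    by (intro exI[of _ "\<lambda>j. (vderiv^^j) g"]) simp
qed

lemma smooth_fun_has_vector_derivative: "smooth_fun g \<Longrightarrow> (g has_vector_derivative vderiv g t) (at t)"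
  unfolding smooth_fun_iff_has_derivs by (metis has_derivs.simps(2))

lemma smooth_fun_vderiv: "smooth_fun g \<Longrightarrow> smooth_fun (vderiv g)"
  unfolding smooth_fun_iff_has_derivs by (metis has_derivs.simps(2))

lemma smooth_fun_add: "smooth_fun f \<Longrightarrow> smooth_fun g \<Longrightarrow> smooth_fun (\<lambda>t. f t + g t)"
  by (simp add: smooth_fun_iff_has_derivs has_derivs_add)

lemma smooth_fun_mult: "smooth_fun f \<Longrightarrow> smooth_fun g \<Longrightarrow> smooth_fun (\<lambda>t. f t * g t)"
  by (simp add: smooth_fun_iff_has_derivs has_derivs_mult)

lemma smooth_fun_const: "smooth_fun (\<lambda>t. c)"
  by (simp add: smooth_fun_iff_has_derivs has_derivs_const)

lemma smooth_fun_of_real: "smooth_fun (\<lambda>t. complex_of_real t)"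
  by (simp add: smooth_fun_iff_has_derivs has_derivs_of_real)

lemma smooth_fun_cmult: "smooth_fun f \<Longrightarrow> smooth_fun (\<lambda>t. c * f t)"
  by (rule smooth_fun_mult[OF smooth_fun_const])

lemma smooth_fun_uminus: "smooth_fun f \<Longrightarrow> smooth_fun (\<lambda>t. - f t)"
  using smooth_fun_cmult[of f "-1"] by simp

lemma smooth_fun_diff: "smooth_fun f \<Longrightarrow> smooth_fun g \<Longrightarrow> smooth_fun (\<lambda>t. f t - g t)"
  using smooth_fun_add[OF _ smooth_fun_uminus] by simp

lemma smooth_fun_divide: "smooth_fun f \<Longrightarrow> smooth_fun (\<lambda>t. f t / c)"
  using smooth_fun_cmult[of f "inverse c"] by (simp add: divide_inverse mult.commute)

lemma vderiv_add:
  "smooth_fun f \<Longrightarrow> smooth_fun g \<Longrightarrow> vderiv (\<lambda>t. f t + g t) = (\<lambda>t. vderiv f t + vderiv g t)"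
  by (intro vderiv_eqI has_vector_derivative_add smooth_fun_has_vector_derivative)

lemma vderiv_diff:
  "smooth_fun f \<Longrightarrow> smooth_fun g \<Longrightarrow> vderiv (\<lambda>t. f t - g t) = (\<lambda>t. vderiv f t - vderiv g t)"
  by (intro vderiv_eqI has_vector_derivative_diff smooth_fun_has_vector_derivative)

lemma vderiv_mult:
  "smooth_fun f \<Longrightarrow> smooth_fun g \<Longrightarrow> vderiv (\<lambda>t. f t * g t) = (\<lambda>t. vderiv f t * g t + f t * vderiv g t)"
  by (rule vderiv_eqI)
     (use has_vector_derivative_mult[OF smooth_fun_has_vector_derivative smooth_fun_has_vector_derivative]
      in \<open>simp add: algebra_simps\<close>)

lemma vderiv_const: "vderiv (\<lambda>t. c) = (\<lambda>t. 0)"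
  by (rule vderiv_eqI) simp

lemma vderiv_uminus: "smooth_fun f \<Longrightarrow> vderiv (\<lambda>t. - f t) = (\<lambda>t. - vderiv f t)"
  by (intro vderiv_eqI has_vector_derivative_minus smooth_fun_has_vector_derivative)

lemma vderiv_cmult: "smooth_fun f \<Longrightarrow> vderiv (\<lambda>t. c * f t) = (\<lambda>t. c * vderiv f t)"
  using vderiv_mult[OF smooth_fun_const, of f c] by (simp add: vderiv_const)

lemma vderiv_divide: "smooth_fun f \<Longrightarrow> vderiv (\<lambda>t. f t / c) = (\<lambda>t. vderiv f t / c)"
  using vderiv_cmult[of f "inverse c"] by (simp add: divide_inverse mult.commute)

lemma vderiv_of_real: "vderiv (\<lambda>t. complex_of_real t) = (\<lambda>t. 1)"
  by (rule vderiv_eqI) (use has_vector_derivative_of_real[of "\<lambda>x. x" 1] in \<open>auto intro: DERIV_ident\<close>)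

lemmas smooth_fun_simps = smooth_fun_divide smooth_fun_add smooth_fun_mult smooth_fun_const
  smooth_fun_of_real smooth_fun_cmult smooth_fun_uminus smooth_fun_diff smooth_fun_vderiv
lemmas vderiv_simps = vderiv_divide vderiv_add vderiv_diff vderiv_mult vderiv_const vderiv_uminus
  vderiv_cmult vderiv_of_real

section \<open>Superfunctions\<close>

lemma sf_eqI:
  assumes "F (False,False) = G (False,False)" "F (True,False) = G (True,False)"
          "F (False,True) = G (False,True)" "F (True,True) = G (True,True)"
  shows "F = G"
proof (rule ext)
  fix c :: "bool \<times> bool" show "F c = G c" using assms by (cases c) (metis (full_types))
qed

lemma sf_dx_vderiv: "sf_dx F = (\<lambda>c. vderiv (F c))"
  by (simp add: sf_dx_def vderiv_def)

lemma smooth_sfD: "smooth_sf F \<Longrightarrow> smooth_fun (F c)" unfolding smooth_sf_def by blast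


lemmas sf_defs = gmul_def cmul_def dxi1_def dxi2_def Dbar1_def Dbar2_def sf_dx_vderiv fun_diff_def
   sf_one_def sf_x_def sf_xi1_def sf_xi2_def sf_ev_def sf_od_def

lemmas sf_simps = sf_defs smooth_fun_simps vderiv_simps smooth_sfD plus_fun_def fun_Compl_def zero_fun_def


lemma sum_fun_apply: "(sum F A) x = sum (\<lambda>a. F a x) A"
  by (induction A rule: infinite_finite_induct) auto

lemma smooth_sfI:
  "smooth_fun (F (False,False)) \<Longrightarrow> smooth_fun (F (True,False)) \<Longrightarrow>
    smooth_fun (F (False,True)) \<Longrightarrow> smooth_fun (F (True,True)) \<Longrightarrow> smooth_sf F"
  unfolding smooth_sf_def by (metis (full_types) prod.exhaust)

lemma smooth_sf_zero[simp]: "smooth_sf 0" by (rule smooth_sfI; simp add: sf_simps)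
lemma smooth_sf_add[simp]: "smooth_sf F \<Longrightarrow> smooth_sf G \<Longrightarrow> smooth_sf (F + G)"
  by (rule smooth_sfI; simp add: sf_simps)
lemma smooth_sf_diff[simp]: "smooth_sf F \<Longrightarrow> smooth_sf G \<Longrightarrow> smooth_sf (F - G)"
  by (rule smooth_sfI; simp add: sf_simps)
lemma smooth_sf_cmul[simp]: "smooth_sf F \<Longrightarrow> smooth_sf (cmul c F)"
  by (rule smooth_sfI; simp add: sf_simps)
lemma smooth_sf_gmul[simp]: "smooth_sf F \<Longrightarrow> smooth_sf G \<Longrightarrow> smooth_sf (gmul F G)"
  by (rule smooth_sfI; simp add: sf_simps)
lemma smooth_sf_dx[simp]: "smooth_sf F \<Longrightarrow> smooth_sf (sf_dx F)"
  by (rule smooth_sfI; simp add: sf_simps)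
lemma smooth_sf_Dbar1[simp]: "smooth_sf F \<Longrightarrow> smooth_sf (Dbar1 F)"
  by (rule smooth_sfI; simp add: sf_simps)
lemma smooth_sf_Dbar2[simp]: "smooth_sf F \<Longrightarrow> smooth_sf (Dbar2 F)"
  by (rule smooth_sfI; simp add: sf_simps)
lemma smooth_sf_ev[simp]: "smooth_sf F \<Longrightarrow> smooth_sf (sf_ev F)"
  by (rule smooth_sfI; simp add: sf_simps)
lemma smooth_sf_od[simp]: "smooth_sf F \<Longrightarrow> smooth_sf (sf_od F)"
  by (rule smooth_sfI; simp add: sf_simps)
lemma smooth_sf_one[simp]: "smooth_sf sf_one" by (rule smooth_sfI; simp add: sf_simps)
lemma smooth_sf_x[simp]: "smooth_sf sf_x" by (rule smooth_sfI; simp add: sf_simps)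
lemma smooth_sf_xi1[simp]: "smooth_sf sf_xi1" by (rule smooth_sfI; simp add: sf_simps)
lemma smooth_sf_xi2[simp]: "smooth_sf sf_xi2" by (rule smooth_sfI; simp add: sf_simps)
lemma smooth_sf_sum[simp]: "(\<And>x. x \<in> A \<Longrightarrow> smooth_sf (F x)) \<Longrightarrow> smooth_sf (\<Sum>x\<in>A. F x)"
  proof (induction A rule: infinite_finite_induct)
  case (insert x A)
  thus ?case by (simp only: sum.insert[OF insert.hyps]) (rule smooth_sf_add; simp add: insert.IH)
qed (simp_all only: sum.infinite sum.empty not_False_eq_True smooth_sf_zero)

lemma sf_dx_add: "smooth_sf F \<Longrightarrow> smooth_sf G \<Longrightarrow> sf_dx (F + G) = sf_dx F + sf_dx G"
  by (rule sf_eqI; simp add: sf_simps; rule ext; simp add: field_simps)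
lemma sf_dx_cmul: "smooth_sf F \<Longrightarrow> sf_dx (cmul c F) = cmul c (sf_dx F)"
  by (rule sf_eqI; simp add: sf_simps; rule ext; simp add: field_simps)
lemma Dbar1_add: "smooth_sf F \<Longrightarrow> smooth_sf G \<Longrightarrow> Dbar1 (F + G) = Dbar1 F + Dbar1 G"
  by (rule sf_eqI; simp add: sf_simps; rule ext; simp add: field_simps)
lemma Dbar1_diff: "smooth_sf F \<Longrightarrow> smooth_sf G \<Longrightarrow> Dbar1 (F - G) = Dbar1 F - Dbar1 G"
  by (rule sf_eqI; simp add: sf_simps; rule ext; simp add: field_simps)
lemma Dbar1_cmul: "smooth_sf F \<Longrightarrow> Dbar1 (cmul c F) = cmul c (Dbar1 F)"
  by (rule sf_eqI; simp add: sf_simps; rule ext; simp add: field_simps)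
lemma Dbar2_add: "smooth_sf F \<Longrightarrow> smooth_sf G \<Longrightarrow> Dbar2 (F + G) = Dbar2 F + Dbar2 G"
  by (rule sf_eqI; simp add: sf_simps; rule ext; simp add: field_simps)
lemma Dbar2_cmul: "smooth_sf F \<Longrightarrow> Dbar2 (cmul c F) = cmul c (Dbar2 F)"
  by (rule sf_eqI; simp add: sf_simps; rule ext; simp add: field_simps)
lemma gmul_add_left: "gmul (F + G) H = gmul F H + gmul G H"
  by (rule sf_eqI; simp add: sf_simps; rule ext; simp add: field_simps)
lemma gmul_diff_left: "gmul (F - G) H = gmul F H - gmul G H"
  by (rule sf_eqI; simp add: sf_simps; rule ext; simp add: field_simps)
lemma gmul_cmul_left: "gmul (cmul c F) H = cmul c (gmul F H)"
  by (rule sf_eqI; simp add: sf_simps; rule ext; simp add: field_simps)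
lemma gmul_cmul_right: "gmul H (cmul c F) = cmul c (gmul H F)"
  by (rule sf_eqI; simp add: sf_simps; rule ext; simp add: field_simps)
lemma gmul_zero_left[simp]: "gmul 0 H = 0"
  by (rule sf_eqI; simp add: sf_simps; rule ext; simp add: field_simps)
lemma gmul_zero_right[simp]: "gmul H 0 = 0"
  by (rule sf_eqI; simp add: sf_simps; rule ext; simp add: field_simps)
lemma gmul_one_left[simp]: "gmul sf_one H = H"
  by (rule sf_eqI; simp add: sf_simps; rule ext; simp add: field_simps)
lemma cmul_add: "cmul c (F + G) = cmul c F + cmul c G"
  by (rule sf_eqI; simp add: sf_simps; rule ext; simp add: field_simps)
lemma cmul_diff: "cmul c (F - G) = cmul c F - cmul c G"
  by (rule sf_eqI; simp add: sf_simps; rule ext; simp add: field_simps)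
lemma cmul_cmul: "cmul c (cmul d F) = cmul (c * d) F"
  by (rule sf_eqI; simp add: sf_simps; rule ext; simp add: field_simps)
lemma cmul_minus_one: "cmul (-1) F = - F" by (rule sf_eqI; simp add: sf_simps)
lemma cmul_one[simp]: "cmul 1 F = F"
  by (rule sf_eqI; simp add: sf_simps; rule ext; simp add: field_simps)
lemma cmul_zero[simp]: "cmul c 0 = 0"
  by (rule sf_eqI; simp add: sf_simps; rule ext; simp add: field_simps)
lemma cmul_zero_left[simp]: "cmul 0 F = 0"
  by (rule sf_eqI; simp add: sf_simps; rule ext; simp add: field_simps)
lemma add_cmul: "cmul c F + cmul d F = cmul (c + d) F"
  by (rule sf_eqI; simp add: sf_simps; rule ext; simp add: field_simps)
lemma cmul_sum: "cmul c (\<Sum>x\<in>A. F x) = (\<Sum>x\<in>A. cmul c (F x))"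
  proof (induction A rule: infinite_finite_induct)
  case (insert x A) thus ?case by (simp only: sum.insert[OF insert.hyps] cmul_add insert.IH)
qed (simp_all only: sum.infinite sum.empty not_False_eq_True cmul_zero)

lemma sf_ev_add: "sf_ev (F + G) = sf_ev F + sf_ev G"
  by (rule sf_eqI; simp add: sf_simps; rule ext; simp add: field_simps)
lemma sf_ev_zero[simp]: "sf_ev 0 = 0"
  by (rule sf_eqI; simp add: sf_simps; rule ext; simp add: field_simps)
lemma sf_od_add: "sf_od (F + G) = sf_od F + sf_od G"
  by (rule sf_eqI; simp add: sf_simps; rule ext; simp add: field_simps)
lemma sf_od_zero[simp]: "sf_od 0 = 0"
  by (rule sf_eqI; simp add: sf_simps; rule ext; simp add: field_simps)
lemma ev_plus_od: "sf_ev F + sf_od F = F"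
  by (rule sf_eqI; simp add: sf_simps; rule ext; simp add: field_simps)
lemma ev_od[simp]: "sf_ev (sf_od F) = 0"
  by (rule sf_eqI; simp add: sf_simps; rule ext; simp add: field_simps)
lemma od_ev[simp]: "sf_od (sf_ev F) = 0"
  by (rule sf_eqI; simp add: sf_simps; rule ext; simp add: field_simps)
lemma Dbar1_Dbar1: "smooth_sf F \<Longrightarrow> Dbar1 (Dbar1 F) = - sf_dx F"
  by (rule sf_eqI; simp add: sf_simps; rule ext; simp add: field_simps)
lemma Dbar2_Dbar2: "smooth_sf F \<Longrightarrow> Dbar2 (Dbar2 F) = - sf_dx F"
  by (rule sf_eqI; simp add: sf_simps; rule ext; simp add: field_simps)
lemma Dbar1_ev: "Dbar1 (sf_ev F) = sf_od (Dbar1 F)"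
  by (rule sf_eqI; simp add: sf_simps; rule ext; simp add: field_simps)
lemma Dbar1_od: "Dbar1 (sf_od F) = sf_ev (Dbar1 F)"
  by (rule sf_eqI; simp add: sf_simps; rule ext; simp add: field_simps)
lemma Dbar2_ev: "Dbar2 (sf_ev F) = sf_od (Dbar2 F)"
  by (rule sf_eqI; simp add: sf_simps; rule ext; simp add: field_simps)
lemma Dbar2_od: "Dbar2 (sf_od F) = sf_ev (Dbar2 F)"
  by (rule sf_eqI; simp add: sf_simps; rule ext; simp add: field_simps)
lemma dx_ev: "sf_dx (sf_ev F) = sf_ev (sf_dx F)"
  by (rule sf_eqI; simp add: sf_simps; rule ext; simp add: field_simps)
lemma dx_od: "sf_dx (sf_od F) = sf_od (sf_dx F)"
  by (rule sf_eqI; simp add: sf_simps; rule ext; simp add: field_simps)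

section \<open>The generators of Aff(2|2)\<close>

definition aff_even :: "complex \<Rightarrow> complex \<Rightarrow> complex \<Rightarrow> sf" where
  "aff_even c1 c2 c3 = (\<lambda>c t. if c = (False,False) then c1 + c2 * complex_of_real t
                                else if c = (True,True) then c3 else 0)"
definition aff_odd :: "complex \<Rightarrow> complex \<Rightarrow> sf" where
  "aff_odd c4 c5 = (\<lambda>c t. if c = (True,False) then c4 else if c = (False,True) then c5 else 0)"

abbreviation X_even :: "complex \<Rightarrow> complex \<Rightarrow> complex \<Rightarrow> sf \<Rightarrow> sf" where
  "X_even c1 c2 c3 \<equiv> Xvec False (aff_even c1 c2 c3)"

abbreviation X_odd :: "complex \<Rightarrow> complex \<Rightarrow> sf \<Rightarrow> sf" where
  "X_odd c4 c5 \<equiv> Xvec True (aff_odd c4 c5)"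

lemmas aff_simps = sf_simps aff_even_def aff_odd_def

lemma smooth_sf_aff_even[simp]: "smooth_sf (aff_even c1 c2 c3)"
  by (rule smooth_sfI; simp add: sf_simps aff_even_def)
lemma smooth_sf_aff_odd[simp]: "smooth_sf (aff_odd c4 c5)"
  by (rule smooth_sfI; simp add: sf_simps aff_odd_def)

lemma Aff22_decompose:
  assumes "f \<in> Aff22"
  obtains c1 c2 c3 c4 c5 where "sf_ev f = aff_even c1 c2 c3" "sf_od f = aff_odd c4 c5" "smooth_sf f"
proof -
  from assms obtain c1 c2 c3 c4 c5 where f: "f = cmul c1 sf_one + cmul c2 sf_x + cmul c3 (gmul sf_xi1 sf_xi2)
            + cmul c4 sf_xi1 + cmul c5 sf_xi2" unfolding Aff22_def by blast
  have "sf_ev f = aff_even c1 c2 c3"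
    unfolding f by (rule sf_eqI; simp add: aff_simps; rule ext; simp add: field_simps)
  moreover have "sf_od f = aff_odd c4 c5"
    unfolding f by (rule sf_eqI; simp add: aff_simps; rule ext; simp add: field_simps)
  moreover have "smooth_sf f" unfolding f by simp
  ultimately show ?thesis using that by blast
qed

lemma Lie_aff_even: "Lie False lam (aff_even c1 c2 c3) G = X_even c1 c2 c3 G + cmul (lam * c2) G"
proof -
  have "sf_dx (aff_even c1 c2 c3) = cmul c2 sf_one"
    by (rule sf_eqI; simp add: aff_simps; rule ext; simp add: field_simps)
  moreover have "gmul (cmul c2 sf_one) G = cmul c2 G" by (simp add: gmul_cmul_left)
  ultimately show ?thesis unfolding Lie_def by (simp add: cmul_cmul)
qed

lemma Lie_aff_odd: "Lie True lam (aff_odd c4 c5) G = X_odd c4 c5 G"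
proof -
  have "sf_dx (aff_odd c4 c5) = 0"
    by (rule sf_eqI; simp add: aff_simps; rule ext; simp add: field_simps)
  thus ?thesis unfolding Lie_def by simp
qed

lemma smooth_sf_X_even[simp]: "smooth_sf G \<Longrightarrow> smooth_sf (X_even c1 c2 c3 G)"
  unfolding Xvec_def by simp
lemma smooth_sf_X_odd[simp]: "smooth_sf G \<Longrightarrow> smooth_sf (X_odd c4 c5 G)"
  unfolding Xvec_def by simp

lemma X_even_add:
  "smooth_sf F \<Longrightarrow> smooth_sf G \<Longrightarrow> X_even c1 c2 c3 (F + G) = X_even c1 c2 c3 F + X_even c1 c2 c3 G"
  unfolding Xvec_def by (rule sf_eqI; simp add: aff_simps; rule ext; simp add: field_simps)
lemma X_even_zero[simp]: "X_even c1 c2 c3 0 = 0"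
  unfolding Xvec_def by (rule sf_eqI; simp add: aff_simps; rule ext; simp add: field_simps)
lemma X_odd_add: "smooth_sf F \<Longrightarrow> smooth_sf G \<Longrightarrow> X_odd c4 c5 (F + G) = X_odd c4 c5 F + X_odd c4 c5 G"
  unfolding Xvec_def by (rule sf_eqI; simp add: aff_simps; rule ext; simp add: field_simps)
lemma X_odd_cmul: "smooth_sf F \<Longrightarrow> X_odd c4 c5 (cmul c F) = cmul c (X_odd c4 c5 F)"
  unfolding Xvec_def by (rule sf_eqI; simp add: aff_simps; rule ext; simp add: field_simps)
lemma X_odd_zero[simp]: "X_odd c4 c5 0 = 0"
  unfolding Xvec_def by (rule sf_eqI; simp add: aff_simps; rule ext; simp add: field_simps)

lemma X_even_gmul:
  "smooth_sf a \<Longrightarrow> smooth_sf G \<Longrightarrow> X_even c1 c2 c3 (gmul a G) = gmul (X_even c1 c2 c3 a) G + gmul a (X_even c1 c2 c3 G)"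
  unfolding Xvec_def by (rule sf_eqI; simp add: aff_simps; rule ext; simp add: field_simps)
lemma sf_dx_X_even:
  "smooth_sf G \<Longrightarrow> sf_dx (X_even c1 c2 c3 G) = X_even c1 c2 c3 (sf_dx G) + cmul c2 (sf_dx G)"
  unfolding Xvec_def by (rule sf_eqI; simp add: aff_simps; rule ext; simp add: field_simps)
lemma Dbar1_X_even:
  "smooth_sf G \<Longrightarrow> Dbar1 (X_even c1 c2 c3 G) = X_even c1 c2 c3 (Dbar1 G) + cmul (c2/2) (Dbar1 G) + cmul (c3/2) (Dbar2 G)"
  unfolding Xvec_def by (rule sf_eqI; simp add: aff_simps; rule ext; simp add: field_simps)
lemma Dbar2_X_even:
  "smooth_sf G \<Longrightarrow> Dbar2 (X_even c1 c2 c3 G) = X_even c1 c2 c3 (Dbar2 G) + cmul (c2/2) (Dbar2 G) - cmul (c3/2) (Dbar1 G)"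
  unfolding Xvec_def by (rule sf_eqI; simp add: aff_simps; rule ext; simp add: field_simps)
lemma X_odd_gmul:
  "smooth_sf a \<Longrightarrow> smooth_sf G \<Longrightarrow> X_odd c4 c5 (gmul a G) = gmul (X_odd c4 c5 a) G + gmul (sf_ev a - sf_od a) (X_odd c4 c5 G)"
  unfolding Xvec_def by (rule sf_eqI; simp add: aff_simps; rule ext; simp add: field_simps)
lemma sf_dx_X_odd: "smooth_sf G \<Longrightarrow> sf_dx (X_odd c4 c5 G) = X_odd c4 c5 (sf_dx G)"
  unfolding Xvec_def by (rule sf_eqI; simp add: aff_simps; rule ext; simp add: field_simps)
lemma Dbar1_X_odd: "smooth_sf G \<Longrightarrow> Dbar1 (X_odd c4 c5 G) = - X_odd c4 c5 (Dbar1 G)"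
  unfolding Xvec_def by (rule sf_eqI; simp add: aff_simps; rule ext; simp add: field_simps)
lemma Dbar2_X_odd: "smooth_sf G \<Longrightarrow> Dbar2 (X_odd c4 c5 G) = - X_odd c4 c5 (Dbar2 G)"
  unfolding Xvec_def by (rule sf_eqI; simp add: aff_simps; rule ext; simp add: field_simps)

section \<open>Monomial differential operators\<close>

definition sf_linear :: "(sf \<Rightarrow> sf) \<Rightarrow> bool" where
  "sf_linear op \<longleftrightarrow> (\<forall>F. smooth_sf F \<longrightarrow> smooth_sf (op F))
     \<and> (\<forall>F G. smooth_sf F \<longrightarrow> smooth_sf G \<longrightarrow> op (F + G) = op F + op G)
     \<and> (\<forall>c F. smooth_sf F \<longrightarrow> op (cmul c F) = cmul c (op F))"

lemma sf_linearI:
  assumes "\<And>F. smooth_sf F \<Longrightarrow> smooth_sf (op F)"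
    and "\<And>F G. smooth_sf F \<Longrightarrow> smooth_sf G \<Longrightarrow> op (F + G) = op F + op G"
    and "\<And>c F. smooth_sf F \<Longrightarrow> op (cmul c F) = cmul c (op F)"
  shows "sf_linear op"
  unfolding sf_linear_def using assms by simp

lemma sf_linear_smooth: "sf_linear op \<Longrightarrow> smooth_sf F \<Longrightarrow> smooth_sf (op F)"
  by (simp add: sf_linear_def)

lemma sf_linear_add: "sf_linear op \<Longrightarrow> smooth_sf F \<Longrightarrow> smooth_sf G \<Longrightarrow> op (F + G) = op F + op G"
  by (simp add: sf_linear_def)

lemma sf_linear_cmul: "sf_linear op \<Longrightarrow> smooth_sf F \<Longrightarrow> op (cmul c F) = cmul c (op F)"
  by (simp add: sf_linear_def)

lemma sf_linear_diff:
  assumes "sf_linear op" "smooth_sf F" "smooth_sf G"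
  shows "op (F - G) = op F - op G"
proof -
  have "op (F - G) = op (F + cmul (-1) G)" by (simp add: cmul_minus_one)
  also have "\<dots> = op F + cmul (-1) (op G)"
    using assms by (simp only: sf_linear_add sf_linear_cmul smooth_sf_cmul)
  also have "\<dots> = op F - op G" by (simp add: cmul_minus_one)
  finally show ?thesis .
qed

lemma sf_linear_comp:
  assumes "sf_linear op1" "sf_linear op2"
  shows "sf_linear (\<lambda>F. op1 (op2 F))"
  using assms by (simp add: sf_linear_def)

lemma sf_linear_funpow: "sf_linear op \<Longrightarrow> sf_linear (op ^^ k)"
proof (induction k)
  case 0 show ?case by (simp add: sf_linear_def)
next
  case (Suc k)
  have "sf_linear (\<lambda>F. op ((op^^k) F))" by (rule sf_linear_comp) (use Suc in auto)
  thus ?case by (simp add: o_def)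
qed

lemma sf_linear_sf_dx: "sf_linear sf_dx"
  by (rule sf_linearI) (simp_all add: sf_dx_add sf_dx_cmul)

lemma sf_linear_Dbar1: "sf_linear Dbar1"
  by (rule sf_linearI) (simp_all add: Dbar1_add Dbar1_cmul)

lemma sf_linear_Dbar2: "sf_linear Dbar2"
  by (rule sf_linearI) (simp_all add: Dbar2_add Dbar2_cmul)

definition monomial_op :: "nat \<Rightarrow> nat \<Rightarrow> nat \<Rightarrow> sf \<Rightarrow> sf" where
  "monomial_op l m n F = (sf_dx ^^ l) ((Dbar1 ^^ m) ((Dbar2 ^^ n) F))"

lemma sf_linear_monomial_op: "sf_linear (monomial_op l m n)"
  unfolding monomial_op_def
  by (intro sf_linear_comp[OF sf_linear_funpow[OF sf_linear_sf_dx]]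
        sf_linear_comp[OF sf_linear_funpow[OF sf_linear_Dbar1] sf_linear_funpow[OF sf_linear_Dbar2]])

lemmas smooth_sf_monomial_op[simp] = sf_linear_smooth[OF sf_linear_monomial_op]
lemmas monomial_op_add = sf_linear_add[OF sf_linear_monomial_op]
lemmas monomial_op_cmul = sf_linear_cmul[OF sf_linear_monomial_op]
lemmas smooth_sf_dx_pow[simp] = sf_linear_smooth[OF sf_linear_funpow[OF sf_linear_sf_dx]]
lemmas dx_pow_add = sf_linear_add[OF sf_linear_funpow[OF sf_linear_sf_dx]]
lemmas dx_pow_diff = sf_linear_diff[OF sf_linear_funpow[OF sf_linear_sf_dx]]
lemmas dx_pow_cmul = sf_linear_cmul[OF sf_linear_funpow[OF sf_linear_sf_dx]]

lemma monomial_op_00: "monomial_op l 0 0 F = (sf_dx^^l) F" by (simp add: monomial_op_def)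
lemma monomial_op_10: "monomial_op l (Suc 0) 0 F = (sf_dx^^l) (Dbar1 F)"
  by (simp add: monomial_op_def)
lemma monomial_op_01: "monomial_op l 0 (Suc 0) F = (sf_dx^^l) (Dbar2 F)"
  by (simp add: monomial_op_def)
lemma monomial_op_11: "monomial_op l (Suc 0) (Suc 0) F = (sf_dx^^l) (Dbar1 (Dbar2 F))"
  by (simp add: monomial_op_def)

lemma less_2_cases: "(m::nat) < 2 \<Longrightarrow> m = 0 \<or> m = Suc 0" by auto

lemma dx_pow_X_even:
  "smooth_sf G \<Longrightarrow> (sf_dx^^l) (X_even c1 c2 c3 G) = X_even c1 c2 c3 ((sf_dx^^l) G) + cmul (c2 * of_nat l) ((sf_dx^^l) G)"
proof (induction l)
  case 0 thus ?case by simp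
next
  case (Suc l)
  have "(sf_dx^^Suc l) (X_even c1 c2 c3 G) = sf_dx (X_even c1 c2 c3 ((sf_dx^^l) G) + cmul (c2 * of_nat l) ((sf_dx^^l) G))"
    by (simp only: funpow.simps(2) o_apply Suc.IH[OF Suc.prems])
  also have "\<dots> = X_even c1 c2 c3 ((sf_dx^^Suc l) G) + cmul c2 ((sf_dx^^Suc l) G) + cmul (c2 * of_nat l) ((sf_dx^^Suc l) G)"
    using Suc.prems by (simp add: sf_dx_add sf_dx_cmul sf_dx_X_even)
  also have "\<dots> = X_even c1 c2 c3 ((sf_dx^^Suc l) G) + cmul (c2 * of_nat (Suc l)) ((sf_dx^^Suc l) G)"
    by (simp add: add.assoc add_cmul algebra_simps)
  finally show ?case .
qed

lemma dx_pow_X_odd: "smooth_sf G \<Longrightarrow> (sf_dx^^l) (X_odd c4 c5 G) = X_odd c4 c5 ((sf_dx^^l) G)"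
  by (induction l) (simp_all add: sf_dx_X_odd)

lemma dx_pow_sf_ev: "(sf_dx^^l) (sf_ev F) = sf_ev ((sf_dx^^l) F)"
  by (induction l) (simp_all add: dx_ev)
lemma dx_pow_sf_od: "(sf_dx^^l) (sf_od F) = sf_od ((sf_dx^^l) F)"
  by (induction l) (simp_all add: dx_od)

text \<open>The generator \<open>X\<^bsub>\<xi>\<^sub>1\<xi>\<^sub>2\<^esub>\<close> rotates \<open>(D\<^sub>1, D\<^sub>2)\<close>
  (see \<open>Dbar1_X_even\<close>, \<open>Dbar2_X_even\<close>); this produces an operator of the same weight.\<close>

definition rotation_op :: "nat \<Rightarrow> nat \<Rightarrow> nat \<Rightarrow> sf \<Rightarrow> sf" where
  "rotation_op l m n G =
    (if m = 1 \<and> n = 0 then cmul (1/2) (monomial_op l 0 1 G)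
     else if m = 0 \<and> n = 1 then cmul (-1/2) (monomial_op l 1 0 G) else 0)"

lemmas sf_arith_defs = cmul_def plus_fun_def fun_diff_def zero_fun_def fun_Compl_def

lemma monomial_op_X_even:
  assumes "m < 2" "n < 2" "smooth_sf G"
  shows "monomial_op l m n (X_even c1 c2 c3 G) =
    X_even c1 c2 c3 (monomial_op l m n G) + cmul (c2 * of_nat (2*l+m+n) / 2) (monomial_op l m n G)
    + cmul c3 (rotation_op l m n G)"
proof -
  consider "m = 0" "n = 0" | "m = Suc 0" "n = 0" | "m = 0" "n = Suc 0" | "m = Suc 0" "n = Suc 0"
    using assms less_2_cases by blast
  thus ?thesis
  proof cases
    case 1 thus ?thesis using assms
      by (simp add: monomial_op_00 dx_pow_X_even rotation_op_def)
  next
    case 2 thus ?thesis using assms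
      by (simp add: monomial_op_10 monomial_op_01 Dbar1_X_even dx_pow_add dx_pow_cmul dx_pow_X_even rotation_op_def)
         (rule sf_eqI; simp add: sf_arith_defs; rule ext; simp add: field_simps)
  next
    case 3 thus ?thesis using assms
      by (simp add: monomial_op_10 monomial_op_01 Dbar2_X_even dx_pow_add dx_pow_diff dx_pow_cmul
            dx_pow_X_even rotation_op_def)
         (rule sf_eqI; simp add: sf_arith_defs; rule ext; simp add: field_simps)
  next
    case 4
    have "Dbar1 (Dbar2 (X_even c1 c2 c3 G)) = X_even c1 c2 c3 (Dbar1 (Dbar2 G)) + cmul c2 (Dbar1 (Dbar2 G))"
      using assms by (simp add: Dbar1_X_even Dbar2_X_even Dbar1_add Dbar1_diff Dbar1_cmul Dbar1_Dbar1 Dbar2_Dbar2)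
          (rule sf_eqI; simp add: sf_arith_defs; rule ext; simp add: field_simps)
    thus ?thesis using 4 assms
      by (simp add: monomial_op_11 dx_pow_add dx_pow_cmul dx_pow_X_even rotation_op_def)
         (rule sf_eqI; simp add: sf_arith_defs; rule ext; simp add: field_simps)
  qed
qed

lemma monomial_op_X_odd:
  assumes "m < 2" "n < 2" "smooth_sf G"
  shows "monomial_op l m n (X_odd c4 c5 G) = cmul ((-1)^(m+n)) (X_odd c4 c5 (monomial_op l m n G))"
proof -
  have neg: "\<And>X. - X = cmul (-1) X" by (rule sf_eqI; simp add: sf_arith_defs)
  consider "m = 0" "n = 0" | "m = Suc 0" "n = 0" | "m = 0" "n = Suc 0" | "m = Suc 0" "n = Suc 0"
    using assms less_2_cases by blast
  thus ?thesis
  proof cases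
    case 1 thus ?thesis using assms by (simp add: monomial_op_00 dx_pow_X_odd)
  next
    case 2 thus ?thesis using assms by (simp add: monomial_op_10 dx_pow_X_odd Dbar1_X_odd neg dx_pow_cmul X_odd_cmul)
  next
    case 3 thus ?thesis using assms by (simp add: monomial_op_01 dx_pow_X_odd Dbar2_X_odd neg dx_pow_cmul X_odd_cmul)
  next
    case 4 thus ?thesis using assms
      by (simp add: monomial_op_11 dx_pow_X_odd Dbar1_X_odd Dbar2_X_odd neg dx_pow_cmul X_odd_cmul Dbar1_cmul cmul_cmul)
  qed
qed

lemma monomial_op_sf_ev:
  assumes "m < 2" "n < 2"
  shows "monomial_op l m n (sf_ev F) =
    (if even (m+n) then sf_ev (monomial_op l m n F) else sf_od (monomial_op l m n F))"
  using less_2_cases[OF assms(1)] less_2_cases[OF assms(2)]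
  by (auto simp: monomial_op_00 monomial_op_10 monomial_op_01 monomial_op_11 dx_pow_sf_ev dx_pow_sf_od
      Dbar1_ev Dbar1_od Dbar2_ev Dbar2_od)

lemma monomial_op_sf_od:
  assumes "m < 2" "n < 2"
  shows "monomial_op l m n (sf_od F) =
    (if even (m+n) then sf_od (monomial_op l m n F) else sf_ev (monomial_op l m n F))"
  using less_2_cases[OF assms(1)] less_2_cases[OF assms(2)]
  by (auto simp: monomial_op_00 monomial_op_10 monomial_op_01 monomial_op_11 dx_pow_sf_ev dx_pow_sf_od
      Dbar1_ev Dbar1_od Dbar2_ev Dbar2_od)

section \<open>Homogeneous operators\<close>

definition term_op :: "sf \<Rightarrow> nat \<Rightarrow> nat \<Rightarrow> nat \<Rightarrow> sop" where
  "term_op a l m n = restr (\<lambda>F. gmul a (monomial_op l m n F))"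

definition hom_op :: "nat \<Rightarrow> (nat \<Rightarrow> nat \<Rightarrow> nat \<Rightarrow> sf) \<Rightarrow> sop" where
  "hom_op i a = restr (\<lambda>F. \<Sum>l\<le>i. \<Sum>m<2. \<Sum>n<2. if 2*l+m+n = i then gmul (a l m n) (monomial_op l m n F) else 0)"

definition homog_ops :: "nat \<Rightarrow> sop set" where
  "homog_ops i = {hom_op i a | a. \<forall>l m n. smooth_sf (a l m n)}"

definition ord_op :: "nat \<Rightarrow> (nat \<Rightarrow> nat \<Rightarrow> nat \<Rightarrow> sf) \<Rightarrow> sop" where
  "ord_op j a = restr (\<lambda>F. \<Sum>l\<le>j. \<Sum>m<2. \<Sum>n<2.
               if 2*l + m + n \<le> j
               then gmul (a l m n) ((sf_dx ^^ l) ((Dbar1 ^^ m) ((Dbar2 ^^ n) F)))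
               else 0)"

lemma Dord_eq_ord_op: "Dord j = {ord_op j a | a. \<forall>l m n. smooth_sf (a l m n)}"
  unfolding Dord_def ord_op_def ..

definition preserves_smooth :: "sop \<Rightarrow> bool" where "preserves_smooth A \<longleftrightarrow> (\<forall>F. smooth_sf F \<longrightarrow> smooth_sf (A F))"

lemma restr_apply: "restr A F = (if smooth_sf F then A F else 0)"
  by (simp add: restr_def)

lemma restr_add: "restr A + restr B = restr (\<lambda>F. A F + B F)"
  by (rule ext) (simp add: restr_apply)
lemma restr_diff: "restr A - restr B = restr (\<lambda>F. A F - B F)"
  by (rule ext) (simp add: restr_apply)
lemma restr_zero: "restr (\<lambda>F. 0) = 0"
  by (rule ext) (simp add: restr_apply)
lemma opscale_restr: "opscale c (restr A) = restr (\<lambda>F. cmul c (A F))"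
  by (rule ext) (simp add: restr_apply opscale_def)
lemma preserves_smooth_restr: "(\<And>F. smooth_sf F \<Longrightarrow> smooth_sf (A F)) \<Longrightarrow> preserves_smooth (restr A)"
  by (simp add: preserves_smooth_def restr_apply)
lemma preserves_smooth_term_op: "smooth_sf a \<Longrightarrow> preserves_smooth (term_op a l m n)"
  unfolding term_op_def by (rule preserves_smooth_restr) simp
lemma preserves_smooth_zero: "preserves_smooth 0" by (simp add: preserves_smooth_def)
lemma preserves_smooth_diff: "preserves_smooth A \<Longrightarrow> preserves_smooth B \<Longrightarrow> preserves_smooth (A - B)"
  by (simp add: preserves_smooth_def)
lemma preserves_smooth_sum: "(\<And>x. x \<in> S \<Longrightarrow> preserves_smooth (A x)) \<Longrightarrow> preserves_smooth (\<Sum>x\<in>S. A x)"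
  by (simp add: preserves_smooth_def sum_fun_apply)
lemma preserves_smooth_hom_op: "\<forall>l m n. smooth_sf (a l m n) \<Longrightarrow> preserves_smooth (hom_op i a)"
  unfolding hom_op_def by (rule preserves_smooth_restr) simp
lemma preserves_smooth_ord_op: "\<forall>l m n. smooth_sf (a l m n) \<Longrightarrow> preserves_smooth (ord_op i a)"
  unfolding ord_op_def by (rule preserves_smooth_restr) (simp add: monomial_op_def[symmetric])

lemma hom_op_eq_sum_term_op:
  "hom_op i a = (\<Sum>l\<le>i. \<Sum>m<2. \<Sum>n<2. if 2*l+m+n = i then term_op (a l m n) l m n else 0)"
  by (rule ext) (simp add: hom_op_def restr_apply sum_fun_apply term_op_def if_distribR cong: if_cong)

lemma hom_op_add: "hom_op i a + hom_op i b = hom_op i (\<lambda>l m n. a l m n + b l m n)"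
  unfolding hom_op_def restr_add
  by (simp add: sum.distrib[symmetric] gmul_add_left if_distrib cong: if_cong)

lemma hom_op_diff: "hom_op i a - hom_op i b = hom_op i (\<lambda>l m n. a l m n - b l m n)"
  unfolding hom_op_def restr_diff
  by (simp add: sum_subtractf[symmetric] gmul_diff_left if_distrib cong: if_cong)

lemma hom_op_opscale: "opscale c (hom_op i a) = hom_op i (\<lambda>l m n. cmul c (a l m n))"
  unfolding hom_op_def opscale_restr
  by (simp add: cmul_sum gmul_cmul_left if_distrib cong: if_cong)

lemma hom_op_cong:
  "(\<And>l m n. 2*l+m+n = i \<Longrightarrow> m < 2 \<Longrightarrow> n < 2 \<Longrightarrow> a l m n = b l m n) \<Longrightarrow> hom_op i a = hom_op i b"
  unfolding hom_op_def by (intro arg_cong[where f=restr] ext sum.cong refl) auto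

lemma hom_op_zero: "hom_op i (\<lambda>l m n. 0) = 0"
  by (rule ext) (simp add: hom_op_def restr_apply cong: if_cong)

lemma homog_ops_zero: "0 \<in> homog_ops i"
proof -
  have "\<forall>l m n. smooth_sf ((\<lambda>l m n. 0) l m n)" by simp
  hence "hom_op i (\<lambda>l m n. 0) \<in> homog_ops i" unfolding homog_ops_def by blast
  thus ?thesis by (simp only: hom_op_zero)
qed

lemma homog_ops_add: "A \<in> homog_ops i \<Longrightarrow> B \<in> homog_ops i \<Longrightarrow> A + B \<in> homog_ops i"
  unfolding homog_ops_def by (auto simp: hom_op_add)

lemma homog_ops_diff: "A \<in> homog_ops i \<Longrightarrow> B \<in> homog_ops i \<Longrightarrow> A - B \<in> homog_ops i"
  unfolding homog_ops_def by (auto simp: hom_op_diff)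

lemma homog_ops_opscale: "A \<in> homog_ops i \<Longrightarrow> opscale c A \<in> homog_ops i"
  unfolding homog_ops_def by (auto simp: hom_op_opscale)

lemma homog_ops_sum: "(\<And>x. x \<in> S \<Longrightarrow> A x \<in> homog_ops i) \<Longrightarrow> (\<Sum>x\<in>S. A x) \<in> homog_ops i"
proof (induction S rule: infinite_finite_induct)
  case (insert x S)
  have "A x \<in> homog_ops i" "sum A S \<in> homog_ops i" using insert by auto
  thus ?case by (simp only: sum.insert[OF insert.hyps]) (rule homog_ops_add)
qed (simp_all only: sum.infinite sum.empty not_False_eq_True homog_ops_zero)

lemma homog_ops_preserves_smooth: "A \<in> homog_ops i \<Longrightarrow> preserves_smooth A"
  unfolding homog_ops_def using preserves_smooth_hom_op by blast

lemma term_op_homog: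
  assumes "2*l+m+n = i" "m < 2" "n < 2" "smooth_sf a"
  shows "term_op a l m n \<in> homog_ops i"
proof -
  define b where "b = (\<lambda>l' m' n'. if l' = l \<and> m' = m \<and> n' = n then a else 0)"
  have sb: "\<forall>l m n. smooth_sf (b l m n)" by (simp add: b_def assms)
  have "hom_op i b = term_op a l m n"
  proof (rule ext)
    fix F
    have "(\<Sum>l'\<le>i. \<Sum>m'<2. \<Sum>n'<2. if 2*l'+m'+n' = i then gmul (b l' m' n') (monomial_op l' m' n' F) else 0)
        = (\<Sum>l'\<le>i. \<Sum>m'<2. \<Sum>n'<2. if l' = l then if m' = m then if n' = n then gmul a (monomial_op l m n F) else 0 else 0 else 0)"
      by (intro sum.cong refl) (auto simp: b_def assms)
    also have "\<dots> = (\<Sum>l'\<le>i. \<Sum>m'<2. if l' = l then if m' = m then gmul a (monomial_op l m n F) else 0 else 0)"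
      by (intro sum.cong refl) (use assms in \<open>auto simp: sum.delta\<close>)
    also have "\<dots> = (\<Sum>l'\<le>i. if l' = l then gmul a (monomial_op l m n F) else 0)"
      by (intro sum.cong refl) (use assms in \<open>auto simp: sum.delta\<close>)
    also have "\<dots> = gmul a (monomial_op l m n F)"
      using assms by (simp add: sum.delta)
    finally show "hom_op i b F = term_op a l m n F"
      by (simp add: hom_op_def term_op_def restr_apply)
  qed
  thus ?thesis unfolding homog_ops_def using sb by (intro CollectI exI[of _ b]) simp
qed

section \<open>The action of Aff(2|2) preserves homogeneity\<close>

definition aff_act :: "complex \<Rightarrow> complex \<Rightarrow> complex \<Rightarrow> complex \<Rightarrow> complex \<Rightarrow> complex \<Rightarrow> complex \<Rightarrow> sop \<Rightarrow> sop" where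
  "aff_act lam mu c1 c2 c3 c4 c5 A = restr (\<lambda>F.
       X_even c1 c2 c3 (A F) + cmul (mu*c2) (A F) - A (X_even c1 c2 c3 F + cmul (lam*c2) F)
     + X_odd c4 c5 (op_ev A F) - op_ev A (X_odd c4 c5 F)
     + X_odd c4 c5 (op_od A F) + op_od A (X_odd c4 c5 F))"

lemma act_eq_aff_act:
  "sf_ev f = aff_even c1 c2 c3 \<Longrightarrow> sf_od f = aff_odd c4 c5 \<Longrightarrow> act lam mu f = aff_act lam mu c1 c2 c3 c4 c5"
  by (rule ext) (simp add: act_def aff_act_def Lie_aff_even Lie_aff_odd)

lemma preserves_smooth_op_ev: "preserves_smooth A \<Longrightarrow> smooth_sf F \<Longrightarrow> smooth_sf (op_ev A F)"
  by (simp add: op_ev_def preserves_smooth_def)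
lemma preserves_smooth_op_od: "preserves_smooth A \<Longrightarrow> smooth_sf F \<Longrightarrow> smooth_sf (op_od A F)"
  by (simp add: op_od_def preserves_smooth_def)
lemma preserves_smoothD: "preserves_smooth A \<Longrightarrow> smooth_sf F \<Longrightarrow> smooth_sf (A F)"
  by (simp add: preserves_smooth_def)

lemma op_ev_add: "op_ev (A + B) F = op_ev A F + op_ev B F"
  by (simp add: op_ev_def sf_ev_add sf_od_add algebra_simps)
lemma op_od_add: "op_od (A + B) F = op_od A F + op_od B F"
  by (simp add: op_od_def sf_ev_add sf_od_add algebra_simps)
lemma op_ev_zero: "op_ev 0 F = 0" by (simp add: op_ev_def)
lemma op_od_zero: "op_od 0 F = 0" by (simp add: op_od_def)

lemma aff_act_add:
  assumes "preserves_smooth A" "preserves_smooth B"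
  shows "aff_act lam mu c1 c2 c3 c4 c5 (A + B) = aff_act lam mu c1 c2 c3 c4 c5 A + aff_act lam mu c1 c2 c3 c4 c5 B"
proof (rule ext)
  fix F
  show "aff_act lam mu c1 c2 c3 c4 c5 (A + B) F = (aff_act lam mu c1 c2 c3 c4 c5 A + aff_act lam mu c1 c2 c3 c4 c5 B) F"
  proof (cases "smooth_sf F")
    case True
    have s: "smooth_sf (A F)" "smooth_sf (B F)" "smooth_sf (op_ev A F)" "smooth_sf (op_ev B F)"
        "smooth_sf (op_od A F)" "smooth_sf (op_od B F)"
      using assms True by (simp_all add: preserves_smoothD preserves_smooth_op_ev preserves_smooth_op_od)
    show ?thesis using True s
      by (simp add: aff_act_def restr_apply op_ev_add op_od_add X_even_add X_odd_add cmul_add algebra_simps)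
  qed (simp add: aff_act_def restr_apply)
qed

lemma aff_act_zero: "aff_act lam mu c1 c2 c3 c4 c5 0 = 0"
  by (rule ext) (simp add: aff_act_def restr_apply op_ev_zero op_od_zero)

lemma aff_act_sum:
  "(\<And>x. x \<in> S \<Longrightarrow> preserves_smooth (A x)) \<Longrightarrow>
    aff_act lam mu c1 c2 c3 c4 c5 (\<Sum>x\<in>S. A x) = (\<Sum>x\<in>S. aff_act lam mu c1 c2 c3 c4 c5 (A x))"
proof (induction S rule: infinite_finite_induct)
  case (insert x S)
  have p: "preserves_smooth (A x)" "preserves_smooth (\<Sum>x\<in>S. A x)"
    using insert by (auto intro: preserves_smooth_sum)
  have "aff_act lam mu c1 c2 c3 c4 c5 (\<Sum>x\<in>insert x S. A x) = aff_act lam mu c1 c2 c3 c4 c5 (A x + (\<Sum>x\<in>S. A x))"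
    by (simp only: sum.insert[OF insert.hyps])
  also have "\<dots> = aff_act lam mu c1 c2 c3 c4 c5 (A x) + aff_act lam mu c1 c2 c3 c4 c5 (\<Sum>x\<in>S. A x)"
    by (rule aff_act_add[OF p])
  also have "\<dots> = (\<Sum>x\<in>insert x S. aff_act lam mu c1 c2 c3 c4 c5 (A x))"
    using insert by (simp only: sum.insert[OF insert.hyps]) simp
  finally show ?case .
qed (simp_all only: sum.infinite sum.empty not_False_eq_True aff_act_zero)

lemma aff_act_diff:
  assumes "preserves_smooth A" "preserves_smooth B"
  shows "aff_act lam mu c1 c2 c3 c4 c5 (A - B) = aff_act lam mu c1 c2 c3 c4 c5 A - aff_act lam mu c1 c2 c3 c4 c5 B"
proof -
  have "aff_act lam mu c1 c2 c3 c4 c5 A = aff_act lam mu c1 c2 c3 c4 c5 ((A - B) + B)" by simp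
  also have "\<dots> = aff_act lam mu c1 c2 c3 c4 c5 (A - B) + aff_act lam mu c1 c2 c3 c4 c5 B"
    by (rule aff_act_add) (simp_all add: assms preserves_smooth_diff)
  finally show ?thesis by simp
qed

definition sf_part :: "nat \<Rightarrow> sf \<Rightarrow> sf" where "sf_part k a = (if even k then sf_ev a else sf_od a)"

lemma op_ev_term_op:
  assumes "m < 2" "n < 2" "smooth_sf F"
  shows "op_ev (term_op a l m n) F = gmul (sf_part (m+n) a) (monomial_op l m n F)"
proof -
  have "op_ev (term_op a l m n) F =
      sf_ev (gmul a (monomial_op l m n (sf_ev F))) + sf_od (gmul a (monomial_op l m n (sf_od F)))"
    using assms by (simp add: op_ev_def term_op_def restr_apply)
  also have "\<dots> = gmul (sf_part (m+n) a) (monomial_op l m n F)"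
    unfolding monomial_op_sf_ev[OF assms(1,2)] monomial_op_sf_od[OF assms(1,2)] sf_part_def
    by (cases "even (m+n)"; simp; rule sf_eqI;
        simp add: sf_ev_def sf_od_def gmul_def plus_fun_def; rule ext; simp add: algebra_simps)
  finally show ?thesis .
qed

lemma op_od_term_op:
  assumes "m < 2" "n < 2" "smooth_sf F"
  shows "op_od (term_op a l m n) F = gmul (sf_part (Suc (m+n)) a) (monomial_op l m n F)"
proof -
  have "op_od (term_op a l m n) F =
      sf_od (gmul a (monomial_op l m n (sf_ev F))) + sf_ev (gmul a (monomial_op l m n (sf_od F)))"
    using assms by (simp add: op_od_def term_op_def restr_apply)
  also have "\<dots> = gmul (sf_part (Suc (m+n)) a) (monomial_op l m n F)"
    unfolding monomial_op_sf_ev[OF assms(1,2)] monomial_op_sf_od[OF assms(1,2)] sf_part_def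
    by (cases "even (m+n)"; simp; rule sf_eqI;
        simp add: sf_ev_def sf_od_def gmul_def plus_fun_def; rule ext; simp add: algebra_simps)
  finally show ?thesis .
qed

lemma smooth_sf_part[simp]: "smooth_sf a \<Longrightarrow> smooth_sf (sf_part k a)"
  by (simp add: sf_part_def)

lemma even_bracket_term_op:
  assumes a: "smooth_sf a" and F: "smooth_sf F" and mn: "m < 2" "n < 2"
  shows "X_even c1 c2 c3 (term_op a l m n F) + cmul (mu*c2) (term_op a l m n F)
           - term_op a l m n (X_even c1 c2 c3 F + cmul (lam*c2) F)
         = gmul (X_even c1 c2 c3 a + cmul ((mu - lam)*c2 - c2 * of_nat (2*l+m+n) / 2) a) (monomial_op l m n F)
           - gmul (cmul c3 a) (rotation_op l m n F)"
proof -
  let ?X = "X_even c1 c2 c3" and ?TF = "monomial_op l m n F"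
  have e1: "term_op a l m n F = gmul a ?TF" using F by (simp add: term_op_def restr_apply)
  have e2: "term_op a l m n (?X F + cmul (lam*c2) F) =
      gmul a (?X ?TF + cmul (c2 * of_nat (2*l+m+n) / 2) ?TF + cmul c3 (rotation_op l m n F) + cmul (lam*c2) ?TF)"
    using F mn by (simp add: term_op_def restr_apply monomial_op_add monomial_op_cmul monomial_op_X_even)
  have xg: "?X (gmul a ?TF) = gmul (?X a) ?TF + gmul a (?X ?TF)"
    using a F by (simp add: X_even_gmul)
  show ?thesis unfolding e1 e2 xg
    by (rule sf_eqI; simp add: gmul_def cmul_def sf_arith_defs; rule ext; simp add: field_simps)
qed

lemma odd_bracket_term_op:
  assumes a: "smooth_sf a" and F: "smooth_sf F" and mn: "m < 2" "n < 2"
  shows "X_odd c4 c5 (op_ev (term_op a l m n) F) - op_ev (term_op a l m n) (X_odd c4 c5 F)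
         + X_odd c4 c5 (op_od (term_op a l m n) F) + op_od (term_op a l m n) (X_odd c4 c5 F)
         = gmul (X_odd c4 c5 a) (monomial_op l m n F)"
proof -
  let ?Y = "X_odd c4 c5" and ?TF = "monomial_op l m n F"
  have ya: "?Y a = ?Y (sf_ev a) + ?Y (sf_od a)"
    using a by (simp add: X_odd_add[symmetric] ev_plus_od)
  have yg: "?Y (gmul b ?TF) = gmul (?Y b) ?TF + gmul (sf_ev b - sf_od b) (?Y ?TF)" if "smooth_sf b" for b
    using that F by (simp add: X_odd_gmul)
  have ev: "smooth_sf (sf_ev a)" and od: "smooth_sf (sf_od a)" using a by simp_all
  have lhs: "?Y (op_ev (term_op a l m n) F) - op_ev (term_op a l m n) (?Y F)
         + ?Y (op_od (term_op a l m n) F) + op_od (term_op a l m n) (?Y F)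
       = ?Y (gmul (sf_part (m+n) a) ?TF) - gmul (sf_part (m+n) a) (cmul ((-1)^(m+n)) (?Y ?TF))
         + ?Y (gmul (sf_part (Suc (m+n)) a) ?TF) + gmul (sf_part (Suc (m+n)) a) (cmul ((-1)^(m+n)) (?Y ?TF))"
    using F mn by (simp add: op_ev_term_op op_od_term_op monomial_op_X_odd)
  show ?thesis
  proof (cases "even (m+n)")
    case True
    hence pp: "sf_part (m+n) a = sf_ev a" "sf_part (Suc (m+n)) a = sf_od a" "(-1::complex)^(m+n) = 1"
      by (simp_all add: sf_part_def)
    show ?thesis unfolding lhs pp ya yg[OF ev] yg[OF od]
      by (rule sf_eqI; simp add: gmul_def cmul_def sf_ev_def sf_od_def sf_arith_defs; rule ext; simp add: field_simps)
  next
    case False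
    hence pp: "sf_part (m+n) a = sf_od a" "sf_part (Suc (m+n)) a = sf_ev a" "(-1::complex)^(m+n) = -1"
      by (simp_all add: sf_part_def)
    show ?thesis unfolding lhs pp ya yg[OF ev] yg[OF od]
      by (rule sf_eqI; simp add: gmul_def cmul_def sf_ev_def sf_od_def sf_arith_defs; rule ext; simp add: field_simps)
  qed
qed

lemma aff_act_term_op:
  assumes a: "smooth_sf a" and mn: "m < 2" "n < 2"
  shows "aff_act lam mu c1 c2 c3 c4 c5 (term_op a l m n) =
     term_op (X_even c1 c2 c3 a + X_odd c4 c5 a + cmul ((mu - lam)*c2 - c2 * of_nat (2*l+m+n) / 2) a) l m n
     - restr (\<lambda>F. gmul (cmul c3 a) (rotation_op l m n F))"
proof (rule ext)
  fix F
  show "aff_act lam mu c1 c2 c3 c4 c5 (term_op a l m n) F =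
     (term_op (X_even c1 c2 c3 a + X_odd c4 c5 a + cmul ((mu - lam)*c2 - c2 * of_nat (2*l+m+n) / 2) a) l m n
     - restr (\<lambda>F. gmul (cmul c3 a) (rotation_op l m n F))) F"
  proof (cases "smooth_sf F")
    case True
    let ?k = "(mu - lam)*c2 - c2 * of_nat (2*l+m+n) / 2" and ?TF = "monomial_op l m n F"
    have "aff_act lam mu c1 c2 c3 c4 c5 (term_op a l m n) F =
        (X_even c1 c2 c3 (term_op a l m n F) + cmul (mu*c2) (term_op a l m n F)
           - term_op a l m n (X_even c1 c2 c3 F + cmul (lam*c2) F))
      + (X_odd c4 c5 (op_ev (term_op a l m n) F) - op_ev (term_op a l m n) (X_odd c4 c5 F)
         + X_odd c4 c5 (op_od (term_op a l m n) F) + op_od (term_op a l m n) (X_odd c4 c5 F))"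
      using True by (simp add: aff_act_def restr_apply algebra_simps)
    also have "\<dots> = (gmul (X_even c1 c2 c3 a + cmul ?k a) ?TF - gmul (cmul c3 a) (rotation_op l m n F))
        + gmul (X_odd c4 c5 a) ?TF"
      by (simp only: even_bracket_term_op[OF a True mn] odd_bracket_term_op[OF a True mn])
    also have "\<dots> = (term_op (X_even c1 c2 c3 a + X_odd c4 c5 a + cmul ?k a) l m n
        - restr (\<lambda>F. gmul (cmul c3 a) (rotation_op l m n F))) F"
      using True by (simp add: term_op_def restr_apply gmul_add_left algebra_simps)
    finally show ?thesis .
  qed (simp add: aff_act_def term_op_def restr_apply)
qed

lemma rotation_term_homog:
  assumes "smooth_sf a" "m < 2" "n < 2"
  shows "restr (\<lambda>F. gmul (cmul c3 a) (rotation_op l m n F)) \<in> homog_ops (2*l+m+n)"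
proof -
  consider "m = 1" "n = 0" | "m = 0" "n = 1" | "\<not> (m = 1 \<and> n = 0)" "\<not> (m = 0 \<and> n = 1)" by blast
  thus ?thesis
  proof cases
    case 1
    have "restr (\<lambda>F. gmul (cmul c3 a) (rotation_op l m n F)) = term_op (cmul (c3/2) a) l 0 1"
      unfolding term_op_def rotation_op_def using 1 by (simp add: gmul_cmul_right gmul_cmul_left cmul_cmul)
    thus ?thesis using 1 assms by (simp add: term_op_homog)
  next
    case 2
    have "restr (\<lambda>F. gmul (cmul c3 a) (rotation_op l m n F)) = term_op (cmul (- c3/2) a) l 1 0"
      unfolding term_op_def rotation_op_def using 2 by (simp add: gmul_cmul_right gmul_cmul_left cmul_cmul)
    thus ?thesis using 2 assms by (simp add: term_op_homog)
  next
    case 3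
    hence "\<And>F. rotation_op l m n F = 0" unfolding rotation_op_def by auto
    hence "restr (\<lambda>F. gmul (cmul c3 a) (rotation_op l m n F)) = 0"
      by (simp add: restr_zero)
    thus ?thesis by (simp add: homog_ops_zero)
  qed
qed

lemma aff_act_term_op_homog:
  assumes "smooth_sf a" "m < 2" "n < 2" "2*l+m+n = i"
  shows "aff_act lam mu c1 c2 c3 c4 c5 (term_op a l m n) \<in> homog_ops i"
  unfolding aff_act_term_op[OF assms(1-3)]
  using assms
  by (intro homog_ops_diff term_op_homog rotation_term_homog[where l=l and m=m and n=n, simplified assms(4)])
     simp_all

lemma aff_act_sum_homog:
  assumes "\<And>x. x \<in> S \<Longrightarrow> preserves_smooth (f x) \<and> aff_act lam mu c1 c2 c3 c4 c5 (f x) \<in> homog_ops i"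
  shows "preserves_smooth (\<Sum>x\<in>S. f x) \<and> aff_act lam mu c1 c2 c3 c4 c5 (\<Sum>x\<in>S. f x) \<in> homog_ops i"
  using assms by (simp add: preserves_smooth_sum aff_act_sum homog_ops_sum)

lemma aff_act_hom_op:
  assumes "\<forall>l m n. smooth_sf (a l m n)"
  shows "aff_act lam mu c1 c2 c3 c4 c5 (hom_op i a) \<in> homog_ops i"
proof -
  have t: "preserves_smooth (if 2*l+m+n = i then term_op (a l m n) l m n else 0) \<and>
       aff_act lam mu c1 c2 c3 c4 c5 (if 2*l+m+n = i then term_op (a l m n) l m n else 0) \<in> homog_ops i"
    if "m < 2" "n < 2" for l m n
    using that assms
    by (auto simp: preserves_smooth_term_op preserves_smooth_zero aff_act_zero homog_ops_zero
        intro!: aff_act_term_op_homog)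
  have "preserves_smooth (hom_op i a) \<and> aff_act lam mu c1 c2 c3 c4 c5 (hom_op i a) \<in> homog_ops i"
    unfolding hom_op_eq_sum_term_op
    by (intro aff_act_sum_homog) (simp add: t)
  thus ?thesis by blast
qed

lemma aff_act_homog: assumes "H \<in> homog_ops i" shows "aff_act lam mu c1 c2 c3 c4 c5 H \<in> homog_ops i"
proof -
  obtain a where "H = hom_op i a" "\<forall>l m n. smooth_sf (a l m n)"
    using assms unfolding homog_ops_def by blast
  thus ?thesis using aff_act_hom_op by simp
qed

lemma ord_op_eq_sum_hom_op: "ord_op j a = (\<Sum>i\<le>j. hom_op i a)"
proof (rule ext)
  fix F
  let ?g = "\<lambda>l m n. gmul (a l m n) (monomial_op l m n F)"
  have "(\<Sum>i\<le>j. \<Sum>l\<le>i. \<Sum>m<2. \<Sum>n<2. if 2*l+m+n = i then ?g l m n else 0)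
      = (\<Sum>i\<le>j. \<Sum>l\<le>j. \<Sum>m<2. \<Sum>n<2. if 2*l+m+n = i then ?g l m n else 0)"
  proof (rule sum.cong[OF refl])
    fix i assume "i \<in> {..j}"
    thus "(\<Sum>l\<le>i. \<Sum>m<2. \<Sum>n<2. if 2*l+m+n = i then ?g l m n else 0)
      = (\<Sum>l\<le>j. \<Sum>m<2. \<Sum>n<2. if 2*l+m+n = i then ?g l m n else 0)"
      by (intro sum.mono_neutral_left) (auto intro!: sum.neutral)
  qed
  also have "\<dots> = (\<Sum>l\<le>j. \<Sum>m<2. \<Sum>n<2. \<Sum>i\<le>j. if 2*l+m+n = i then ?g l m n else 0)"
    by (subst sum.swap, rule sum.cong[OF refl], subst sum.swap, rule sum.cong[OF refl], subst sum.swap, rule refl)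
  also have "\<dots> = (\<Sum>l\<le>j. \<Sum>m<2. \<Sum>n<2. if 2*l+m+n \<le> j then ?g l m n else 0)"
    by (intro sum.cong refl) (simp add: sum.delta)
  finally have eq: "(\<Sum>i\<le>j. \<Sum>l\<le>i. \<Sum>m<2. \<Sum>n<2. if 2*l+m+n = i then ?g l m n else 0)
      = (\<Sum>l\<le>j. \<Sum>m<2. \<Sum>n<2. if 2*l+m+n \<le> j then ?g l m n else 0)" .
  show "ord_op j a F = (\<Sum>i\<le>j. hom_op i a) F"
    using eq unfolding ord_op_def hom_op_def monomial_op_def[symmetric] by (simp add: restr_apply sum_fun_apply)
qed

section \<open>Linear independence of the monomial operators\<close>

lemma has_vector_derivative_shifted_monomial:
  "((\<lambda>t. c * complex_of_real ((t - t0)^k)) has_vector_derivative c * (of_nat k * complex_of_real ((t - t0)^(k - 1)))) (at t)"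
proof -
  have "((\<lambda>t. (t - t0)^k) has_real_derivative (real k * (t - t0)^(k - 1))) (at t)"
    by (auto intro!: derivative_eq_intros)
  from has_vector_derivative_of_real[OF this]
  have "((\<lambda>t. complex_of_real ((t - t0)^k)) has_vector_derivative of_nat k * complex_of_real ((t - t0)^(k - 1))) (at t)"
    by simp
  thus ?thesis by (rule has_vector_derivative_mult_right)
qed

lemma vderiv_shifted_monomial:
  "vderiv (\<lambda>t. c * complex_of_real ((t - t0)^k)) = (\<lambda>t. (c * of_nat k) * complex_of_real ((t - t0)^(k - 1)))"
  by (rule vderiv_eqI) (simp only: mult.assoc has_vector_derivative_shifted_monomial)

definition shifted_power :: "nat \<Rightarrow> real \<Rightarrow> real \<Rightarrow> complex" where
  "shifted_power K t0 = (\<lambda>t. complex_of_real ((t - t0)^K))"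

lemma vderiv_pow_shifted_power:
  "(vderiv^^r) (shifted_power K t0) = (\<lambda>t. of_nat (\<Prod>i<r. K - i) * complex_of_real ((t - t0)^(K - r)))"
proof (induction r)
  case 0 thus ?case by (simp add: shifted_power_def)
next
  case (Suc r)
  have "(vderiv^^Suc r) (shifted_power K t0) = vderiv (\<lambda>t. of_nat (\<Prod>i<r. K - i) * complex_of_real ((t - t0)^(K - r)))"
    using Suc by simp
  also have "\<dots> = (\<lambda>t. (of_nat (\<Prod>i<r. K - i) * of_nat (K - r)) * complex_of_real ((t - t0)^(K - r - 1)))"
    by (rule vderiv_shifted_monomial)
  also have "\<dots> = (\<lambda>t. of_nat (\<Prod>i<Suc r. K - i) * complex_of_real ((t - t0)^(K - Suc r)))"
    by (simp only: prod.lessThan_Suc of_nat_mult) (simp only: diff_diff_left Suc_eq_plus1)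
  finally show ?case .
qed

lemma has_derivs_shifted_power: "has_derivs j ((vderiv^^r) (shifted_power K t0))"
proof (induction j arbitrary: r)
  case (Suc j)
  have "\<And>t. ((vderiv^^r) (shifted_power K t0) has_vector_derivative vderiv ((vderiv^^r) (shifted_power K t0)) t) (at t)"
    unfolding vderiv_pow_shifted_power vderiv_shifted_monomial
    by (simp only: mult.assoc has_vector_derivative_shifted_monomial)
  moreover have "has_derivs j (vderiv ((vderiv^^r) (shifted_power K t0)))" using Suc[of "Suc r"] by simp
  ultimately show ?case by simp
qed simp

lemma smooth_fun_shifted_power: "smooth_fun (shifted_power K t0)"
  using has_derivs_shifted_power[of _ 0] by (simp add: smooth_fun_iff_has_derivs)

lemma vderiv_pow_shifted_power_at:
  "(vderiv^^r) (shifted_power K t0) t0 = (if r = K then of_nat (fact K) else 0)"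
proof (cases "r = K")
  case True
  have "(\<Prod>i<K. K - i) = fact K" by (simp add: fact_prod_rev lessThan_atLeast0)
  thus ?thesis using True by (simp add: vderiv_pow_shifted_power)
next
  case False
  show ?thesis
  proof (cases "r < K")
    case True thus ?thesis using False by (simp add: vderiv_pow_shifted_power)
  next
    case False
    hence "K \<in> {..<r}" using \<open>r \<noteq> K\<close> by simp
    hence "(\<Prod>i<r. K - i) = 0" by (meson diff_self_eq_0 prod_zero_iff finite_lessThan)
    thus ?thesis using \<open>r \<noteq> K\<close> by (simp add: vderiv_pow_shifted_power)
  qed
qed

definition sf_single :: "bool \<times> bool \<Rightarrow> (real \<Rightarrow> complex) \<Rightarrow> sf" where
  "sf_single c g = (\<lambda>c' t. if c' = c then g t else 0)"

lemma smooth_sf_single[simp]: "smooth_fun g \<Longrightarrow> smooth_sf (sf_single c g)"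
  unfolding smooth_sf_def
proof
  fix c' assume "smooth_fun g" show "smooth_fun (sf_single c g c')"
    by (cases "c' = c") (simp_all add: sf_single_def smooth_fun_const \<open>smooth_fun g\<close>)
qed

lemma sf_dx_sf_single: "sf_dx (sf_single c g) = sf_single c (vderiv g)"
  by (rule ext) (auto simp: sf_dx_vderiv sf_single_def vderiv_const)

lemma dx_pow_sf_single: "(sf_dx^^l) (sf_single c g) = sf_single c ((vderiv^^l) g)"
  by (induction l) (simp_all add: sf_dx_sf_single)

lemma funpow_vderiv_Suc: "(vderiv^^l) (vderiv g) = (vderiv^^Suc l) g" by (simp add: funpow_swap1)

lemma Dbar1_sf_single_00:
  "Dbar1 (sf_single (False,False) g) = cmul (-1) (sf_single (True,False) (vderiv g))"
  by (rule sf_eqI; simp add: sf_simps sf_single_def; rule ext; simp)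
lemma Dbar1_sf_single_10: "Dbar1 (sf_single (True,False) g) = sf_single (False,False) g"
  by (rule sf_eqI; simp add: sf_simps sf_single_def; rule ext; simp)
lemma Dbar1_sf_single_01:
  "Dbar1 (sf_single (False,True) g) = cmul (-1) (sf_single (True,True) (vderiv g))"
  by (rule sf_eqI; simp add: sf_simps sf_single_def; rule ext; simp)
lemma Dbar1_sf_single_11: "Dbar1 (sf_single (True,True) g) = sf_single (False,True) g"
  by (rule sf_eqI; simp add: sf_simps sf_single_def; rule ext; simp)
lemma Dbar2_sf_single_00:
  "Dbar2 (sf_single (False,False) g) = cmul (-1) (sf_single (False,True) (vderiv g))"
  by (rule sf_eqI; simp add: sf_simps sf_single_def; rule ext; simp)
lemma Dbar2_sf_single_10: "Dbar2 (sf_single (True,False) g) = sf_single (True,True) (vderiv g)"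
  by (rule sf_eqI; simp add: sf_simps sf_single_def; rule ext; simp)
lemma Dbar2_sf_single_01: "Dbar2 (sf_single (False,True) g) = sf_single (False,False) g"
  by (rule sf_eqI; simp add: sf_simps sf_single_def; rule ext; simp)
lemma Dbar2_sf_single_11: "Dbar2 (sf_single (True,True) g) = cmul (-1) (sf_single (True,False) g)"
  by (rule sf_eqI; simp add: sf_simps sf_single_def; rule ext; simp)

lemma sum_less_2: "(\<Sum>m<(2::nat). f m) = f 0 + f (Suc 0)"
  by (simp add: numeral_2_eq_2)

lemma vderiv_shifted_power_at:
  "vderiv ((vderiv^^r) (shifted_power K t0)) t0 = (if Suc r = K then of_nat (fact K) else 0)"
  using vderiv_pow_shifted_power_at[of "Suc r"] by simp
lemma vderiv2_shifted_power_at: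
  "vderiv (vderiv ((vderiv^^r) (shifted_power K t0))) t0 = (if Suc (Suc r) = K then of_nat (fact K) else 0)"
  using vderiv_pow_shifted_power_at[of "Suc (Suc r)"] by simp

lemma cmul_apply: "cmul a F c t = a * F c t" by (simp add: cmul_def)
lemma sf_single_apply: "sf_single c g c' t = (if c' = c then g t else 0)"
  by (simp add: sf_single_def)

lemma bool_pair_cases: obtains "c = (False,False)" | "c = (True,False)" | "c = (False,True)" | "c = (True,True)"
  by (cases c) auto

lemmas test_simps = sum_less_2 monomial_op_00 monomial_op_10 monomial_op_01 monomial_op_11
  Dbar1_sf_single_00 Dbar1_sf_single_10 Dbar1_sf_single_01 Dbar1_sf_single_11
  Dbar2_sf_single_00 Dbar2_sf_single_10 Dbar2_sf_single_01 Dbar2_sf_single_11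
  Dbar1_cmul dx_pow_cmul dx_pow_sf_single funpow_vderiv_Suc
  vderiv_pow_shifted_power_at vderiv_shifted_power_at vderiv2_shifted_power_at
  gmul_def cmul_apply sf_single_apply smooth_fun_vderiv smooth_fun_shifted_power

lemma gmul_apply_zero_left: "(\<And>c. F c t = 0) \<Longrightarrow> gmul F G c' t = 0"
  by (cases c' rule: bool_pair_cases) (simp_all add: gmul_def)

lemma gmul_apply_zero_right: "(\<And>c. G c t = 0) \<Longrightarrow> gmul F G c' t = 0"
  by (cases c' rule: bool_pair_cases) (simp_all add: gmul_def)

lemma monomial_op_shifted_power_at_vanishes:
  assumes "K < l" "m < 2" "n < 2"
  shows "monomial_op l m n (sf_single c (shifted_power K t0)) c' t0 = 0"
  using less_2_cases[OF assms(2)] less_2_cases[OF assms(3)] assms(1)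
  by (cases c rule: bool_pair_cases; cases c' rule: bool_pair_cases; auto simp: test_simps)

text \<open>Applied to \<open>(x - t0)^K\<close> placed in one of the four components and evaluated at \<open>t0\<close>,
  the terms with \<open>\<partial>\<^sub>x\<^sup>K\<close> form a triangular system whose diagonal entries are \<open>K!\<close>.\<close>

lemma coeffs_zero_of_block_vanishes:
  fixes b :: "nat \<Rightarrow> nat \<Rightarrow> sf"
  assumes block: "\<And>c c'. (\<Sum>m<2. \<Sum>n<2.
                    gmul (b m n) (monomial_op K m n (sf_single c (shifted_power K t0)))) c' t0 = 0"
    and mn: "m < 2" "n < 2"
  shows "b m n c t0 = 0"
proof -
  have fK: "(of_nat (fact K) :: complex) \<noteq> 0" by simp
  note eqs = block[of "(False,False)"] block[of "(True,False)"] block[of "(False,True)"] block[of "(True,True)"]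
  have z00: "b 0 0 c t0 = 0" for c
    using eqs[of c] fK by (cases c rule: bool_pair_cases; simp add: test_simps)
  have z10: "b 1 0 c t0 = 0" for c
    using eqs[of c] fK z00 by (cases c rule: bool_pair_cases; simp add: test_simps)
  have z01: "b 0 1 c t0 = 0" for c
    using eqs[of c] fK z00 by (cases c rule: bool_pair_cases; simp add: test_simps)
  have z11: "b 1 1 c t0 = 0" for c
    using eqs[of c] fK z00 z10 z01 by (cases c rule: bool_pair_cases; simp add: test_simps)
  show ?thesis using mn less_2_cases z00 z10 z01 z11 by (metis One_nat_def)
qed

lemma ord_op_zero_coeff_at:
  assumes Z: "ord_op N a = 0"
  defines "b \<equiv> (\<lambda>l m n. if 2*l+m+n \<le> N then a l m n else 0)"
  shows "\<forall>m<2. \<forall>n<2. \<forall>c. b K m n c t0 = 0"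
proof (induction K rule: less_induct)
  case (less K)
  let ?t = "\<lambda>c l. \<Sum>m<2. \<Sum>n<2. gmul (b l m n) (monomial_op l m n (sf_single c (shifted_power K t0)))"
  have sum_zero: "(\<Sum>l\<le>N. ?t c l c' t0) = 0" for c c'
  proof -
    have "ord_op N a (sf_single c (shifted_power K t0)) = (\<Sum>l\<le>N. ?t c l)"
      unfolding ord_op_def monomial_op_def[symmetric] restr_apply
      by (simp only: smooth_sf_single smooth_fun_shifted_power if_True b_def) (intro sum.cong refl; auto)
    hence "(\<Sum>l\<le>N. ?t c l) c' t0 = 0" using Z by simp
    thus ?thesis by (simp only: sum_fun_apply)
  qed
  have other_zero: "?t c l c' t0 = 0" if "l \<noteq> K" for c c' l
  proof -
    have "gmul (b l m n) (monomial_op l m n (sf_single c (shifted_power K t0))) c' t0 = 0"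
      if "m < 2" "n < 2" for m n
    proof (cases "l < K")
      case True thus ?thesis using less.IH that by (intro gmul_apply_zero_left) blast
    next
      case False thus ?thesis using \<open>l \<noteq> K\<close> that
        by (intro gmul_apply_zero_right monomial_op_shifted_power_at_vanishes) auto
    qed
    thus ?thesis by (simp add: sum_fun_apply sum_less_2)
  qed
  show ?case
  proof (cases "K \<le> N")
    case True
    have block: "?t c K c' t0 = 0" for c c'
    proof -
      have "(\<Sum>l\<le>N. ?t c l c' t0) = ?t c K c' t0 + (\<Sum>l\<in>{..N} - {K}. ?t c l c' t0)"
        using True by (subst sum.remove[of _ K]) auto
      also have "(\<Sum>l\<in>{..N} - {K}. ?t c l c' t0) = 0" by (rule sum.neutral) (auto intro: other_zero)
      finally show ?thesis using sum_zero by simp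
    qed
    show ?thesis using coeffs_zero_of_block_vanishes[of "b K", OF block] by blast
  qed (simp add: b_def)
qed

lemma ord_op_zero_coeff:
  assumes Z: "ord_op N a = 0" and idx: "2*l+m+n \<le> N" "m < 2" "n < 2"
  shows "a l m n = 0"
proof (rule ext, rule ext)
  fix c t
  have "\<forall>m<2. \<forall>n<2. \<forall>c. (if 2*l+m+n \<le> N then a l m n else 0) c t = 0"
    using ord_op_zero_coeff_at[OF Z, of l t] by simp
  hence "(if 2*l+m+n \<le> N then a l m n else 0) c t = 0" using idx by blast
  thus "a l m n c t = 0 c t" using idx by simp
qed

section \<open>Decomposition into homogeneous parts\<close>

lemma homog_ops_choice:
  assumes "\<forall>i\<le>j. H i \<in> homog_ops i"
  obtains a where "\<forall>l m n. smooth_sf (a l m n)" "\<forall>i\<le>j. H i = hom_op i a"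
proof -
  have "\<forall>i. \<exists>b. i \<le> j \<longrightarrow> (H i = hom_op i b \<and> (\<forall>l m n. smooth_sf (b l m n)))"
    using assms unfolding homog_ops_def by blast
  then obtain b where b: "\<And>i. i \<le> j \<Longrightarrow> H i = hom_op i (b i) \<and> (\<forall>l m n. smooth_sf (b i l m n))"
    by metis
  define a where "a l m n = (if 2*l+m+n \<le> j then b (2*l+m+n) l m n else 0)" for l m n
  have "\<forall>l m n. smooth_sf (a l m n)" using b by (simp add: a_def)
  moreover have "\<forall>i\<le>j. H i = hom_op i a"
  proof (intro allI impI)
    fix i assume "i \<le> j"
    hence "H i = hom_op i (b i)" using b by blast
    also have "\<dots> = hom_op i a" by (rule hom_op_cong) (use \<open>i \<le> j\<close> in \<open>simp add: a_def\<close>)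
    finally show "H i = hom_op i a" .
  qed
  ultimately show ?thesis using that by blast
qed

lemma Dord_eq_sums: "Dord j = {(\<Sum>i\<le>j. H i) | H. \<forall>i\<le>j. H i \<in> homog_ops i}"
proof
  show "Dord j \<subseteq> {(\<Sum>i\<le>j. H i) | H. \<forall>i\<le>j. H i \<in> homog_ops i}"
  proof
    fix A assume "A \<in> Dord j"
    then obtain a where a: "\<forall>l m n. smooth_sf (a l m n)" "A = ord_op j a" unfolding Dord_eq_ord_op by blast
    hence "A = (\<Sum>i\<le>j. hom_op i a)" by (simp add: ord_op_eq_sum_hom_op)
    moreover have "\<forall>i\<le>j. hom_op i a \<in> homog_ops i" using a unfolding homog_ops_def by blast
    ultimately show "A \<in> {(\<Sum>i\<le>j. H i) | H. \<forall>i\<le>j. H i \<in> homog_ops i}" by blast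
  qed
next
  show "{(\<Sum>i\<le>j. H i) | H. \<forall>i\<le>j. H i \<in> homog_ops i} \<subseteq> Dord j"
  proof
    fix A assume "A \<in> {(\<Sum>i\<le>j. H i) | H. \<forall>i\<le>j. H i \<in> homog_ops i}"
    then obtain H where H: "\<forall>i\<le>j. H i \<in> homog_ops i" "A = (\<Sum>i\<le>j. H i)" by blast
    obtain a where a: "\<forall>l m n. smooth_sf (a l m n)" "\<forall>i\<le>j. H i = hom_op i a"
      using homog_ops_choice[OF H(1)] by blast
    have "A = ord_op j a" using H(2) a(2) by (simp add: ord_op_eq_sum_hom_op)
    thus "A \<in> Dord j" using a(1) unfolding Dord_eq_ord_op by blast
  qed
qed

lemma Dord_sumI: "\<forall>i\<le>j. H i \<in> homog_ops i \<Longrightarrow> (\<Sum>i\<le>j. H i) \<in> Dord j"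
  unfolding Dord_eq_sums by blast

lemma Dord_sumE:
  assumes "A \<in> Dord j"
  obtains H where "\<forall>i\<le>j. H i \<in> homog_ops i" "A = (\<Sum>i\<le>j. H i)"
  using assms unfolding Dord_eq_sums by blast

lemma homog_sum_eq_zero:
  assumes "\<forall>i\<le>j. G i \<in> homog_ops i" "(\<Sum>i\<le>j. G i) = 0"
  shows "\<forall>i\<le>j. G i = 0"
proof -
  obtain a where a: "\<forall>l m n. smooth_sf (a l m n)" "\<forall>i\<le>j. G i = hom_op i a"
    using homog_ops_choice[OF assms(1)] by blast
  have Z: "ord_op j a = 0" using assms(2) a(2) by (simp add: ord_op_eq_sum_hom_op)
  show ?thesis
  proof (intro allI impI)
    fix i assume "i \<le> j"
    have "hom_op i a = hom_op i (\<lambda>l m n. 0)"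
      by (rule hom_op_cong) (use \<open>i \<le> j\<close> in \<open>auto intro: ord_op_zero_coeff[OF Z]\<close>)
    thus "G i = 0" using a(2) \<open>i \<le> j\<close> hom_op_zero by simp
  qed
qed

lemma homog_decomposition_unique:
  assumes "\<forall>i\<le>j. H i \<in> homog_ops i" "\<forall>i\<le>j. K i \<in> homog_ops i" "(\<Sum>i\<le>j. H i) = (\<Sum>i\<le>j. K i)"
  shows "\<forall>i\<le>j. H i = K i"
proof -
  have "\<forall>i\<le>j. H i - K i \<in> homog_ops i" using assms by (simp add: homog_ops_diff)
  moreover have "(\<Sum>i\<le>j. H i - K i) = 0" using assms(3) by (simp add: sum_subtractf)
  ultimately have "\<forall>i\<le>j. H i - K i = 0" by (rule homog_sum_eq_zero)
  thus ?thesis by simp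
qed

lemma homog_ops_Dord: assumes "H \<in> homog_ops i" shows "H \<in> Dord i"
proof -
  let ?G = "\<lambda>k. if k = i then H else 0"
  have "\<forall>k\<le>i. ?G k \<in> homog_ops k" using assms by (simp add: homog_ops_zero)
  hence "(\<Sum>k\<le>i. ?G k) \<in> Dord i" by (rule Dord_sumI)
  thus ?thesis by simp
qed

lemma Dord_zero: "0 \<in> Dord j"
  using homog_ops_Dord[OF homog_ops_zero] .

lemma Dord_add: assumes "A \<in> Dord j" "B \<in> Dord j" shows "A + B \<in> Dord j"
proof -
  obtain H where H: "\<forall>i\<le>j. H i \<in> homog_ops i" "A = (\<Sum>i\<le>j. H i)"
    using Dord_sumE[OF assms(1)] by blast
  obtain K where K: "\<forall>i\<le>j. K i \<in> homog_ops i" "B = (\<Sum>i\<le>j. K i)"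
    using Dord_sumE[OF assms(2)] by blast
  have "A + B = (\<Sum>i\<le>j. H i + K i)" using H K by (simp add: sum.distrib)
  moreover have "\<forall>i\<le>j. H i + K i \<in> homog_ops i" using H K by (simp add: homog_ops_add)
  ultimately show ?thesis using Dord_sumI by simp
qed

lemma Dord_diff: assumes "A \<in> Dord j" "B \<in> Dord j" shows "A - B \<in> Dord j"
proof -
  obtain H where H: "\<forall>i\<le>j. H i \<in> homog_ops i" "A = (\<Sum>i\<le>j. H i)"
    using Dord_sumE[OF assms(1)] by blast
  obtain K where K: "\<forall>i\<le>j. K i \<in> homog_ops i" "B = (\<Sum>i\<le>j. K i)"
    using Dord_sumE[OF assms(2)] by blast
  have "A - B = (\<Sum>i\<le>j. H i - K i)" using H K by (simp add: sum_subtractf)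
  moreover have "\<forall>i\<le>j. H i - K i \<in> homog_ops i" using H K by (simp add: homog_ops_diff)
  ultimately show ?thesis using Dord_sumI by simp
qed

lemma opscale_sum: "opscale c (\<Sum>x\<in>S. A x) = (\<Sum>x\<in>S. opscale c (A x))"
  by (rule ext) (simp add: opscale_def sum_fun_apply cmul_sum)

lemma Dord_opscale: assumes "A \<in> Dord j" shows "opscale c A \<in> Dord j"
proof -
  obtain H where H: "\<forall>i\<le>j. H i \<in> homog_ops i" "A = (\<Sum>i\<le>j. H i)"
    using Dord_sumE[OF assms(1)] by blast
  have "opscale c A = (\<Sum>i\<le>j. opscale c (H i))" using H by (simp add: opscale_sum)
  moreover have "\<forall>i\<le>j. opscale c (H i) \<in> homog_ops i" using H by (simp add: homog_ops_opscale)
  ultimately show ?thesis using Dord_sumI by simp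
qed

lemma Dord_pres: "A \<in> Dord j \<Longrightarrow> preserves_smooth A"
  unfolding Dord_eq_ord_op using preserves_smooth_ord_op by blast

lemma Dord_nonsmooth: "A \<in> Dord j \<Longrightarrow> \<not> smooth_sf F \<Longrightarrow> A F = 0"
  unfolding Dord_eq_ord_op ord_op_def by (auto simp: restr_apply)

lemma Dlow_zero: "0 \<in> Dlow i" unfolding Dlow_def by (simp add: Dord_zero)
lemma Dlow_add: "A \<in> Dlow i \<Longrightarrow> B \<in> Dlow i \<Longrightarrow> A + B \<in> Dlow i"
  unfolding Dlow_def by (cases "i = 0") (auto simp: Dord_add)
lemma Dlow_diff: "A \<in> Dlow i \<Longrightarrow> B \<in> Dlow i \<Longrightarrow> A - B \<in> Dlow i"
  unfolding Dlow_def by (cases "i = 0") (auto simp: Dord_diff)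
lemma opscale_zero: "opscale c 0 = 0" by (rule ext) (simp add: opscale_def)
lemma Dlow_opscale: "A \<in> Dlow i \<Longrightarrow> opscale c A \<in> Dlow i"
  unfolding Dlow_def by (cases "i = 0") (auto simp: Dord_opscale opscale_zero)

lemma homog_ops_Dlow_eq_zero: assumes "H \<in> homog_ops i" "H \<in> Dlow i" shows "H = 0"
proof (cases "i = 0")
  case True thus ?thesis using assms by (simp add: Dlow_def)
next
  case False
  hence "H \<in> Dord (i - 1)" using assms by (simp add: Dlow_def)
  then obtain G where G: "\<forall>k\<le>i-1. G k \<in> homog_ops k" "H = (\<Sum>k\<le>i-1. G k)" by (rule Dord_sumE)
  let ?X = "\<lambda>k. if k = i then H else 0" and ?Y = "\<lambda>k. if k < i then G k else 0"
  have X: "\<forall>k\<le>i. ?X k \<in> homog_ops k" using assms by (simp add: homog_ops_zero)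
  have Y: "\<forall>k\<le>i. ?Y k \<in> homog_ops k" using G False by (simp add: homog_ops_zero)
  have "(\<Sum>k\<le>i. ?Y k) = (\<Sum>k\<le>i-1. ?Y k)"
    using False by (intro sum.mono_neutral_right) auto
  also have "\<dots> = (\<Sum>k\<le>i-1. G k)" using False by (intro sum.cong refl) auto
  finally have "(\<Sum>k\<le>i. ?X k) = (\<Sum>k\<le>i. ?Y k)" using G by simp
  from homog_decomposition_unique[OF X Y this] have "?X i = ?Y i" by blast
  thus ?thesis by simp
qed

definition hom_part :: "nat \<Rightarrow> sop \<Rightarrow> nat \<Rightarrow> sop" where
  "hom_part j A = (SOME H. (\<forall>i\<le>j. H i \<in> homog_ops i) \<and> A = (\<Sum>i\<le>j. H i))"

lemma hom_part_spec: assumes "A \<in> Dord j"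
  shows "\<forall>i\<le>j. hom_part j A i \<in> homog_ops i" "A = (\<Sum>i\<le>j. hom_part j A i)"
proof -
  have "\<exists>H. (\<forall>i\<le>j. H i \<in> homog_ops i) \<and> A = (\<Sum>i\<le>j. H i)" using Dord_sumE[OF assms] by metis
  hence "(\<forall>i\<le>j. hom_part j A i \<in> homog_ops i) \<and> A = (\<Sum>i\<le>j. hom_part j A i)"
    unfolding hom_part_def by (rule someI_ex)
  thus "\<forall>i\<le>j. hom_part j A i \<in> homog_ops i" "A = (\<Sum>i\<le>j. hom_part j A i)" by auto
qed

lemma hom_part_unique:
  assumes "\<forall>i\<le>j. H i \<in> homog_ops i" "A = (\<Sum>i\<le>j. H i)" "i \<le> j"
  shows "hom_part j A i = H i"
proof -
  have A: "A \<in> Dord j" using assms Dord_sumI by simp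
  from homog_decomposition_unique[OF hom_part_spec(1)[OF A] assms(1)] hom_part_spec(2)[OF A] assms(2,3)
  show ?thesis by simp
qed

lemma grcls_self: "X \<in> Dord i \<Longrightarrow> X \<in> grcls i X"
  by (simp add: grcls_def Dlow_zero)

lemma grcls_eq: assumes "X \<in> Dord i" "Y \<in> Dord i" "X - Y \<in> Dlow i" shows "grcls i X = grcls i Y"
proof -
  have "B - X \<in> Dlow i \<longleftrightarrow> B - Y \<in> Dlow i" for B
  proof
    assume h: "B - X \<in> Dlow i"
    have "B - Y = (B - X) + (X - Y)" by (simp add: algebra_simps)
    thus "B - Y \<in> Dlow i" using Dlow_add[OF h assms(3)] by simp
  next
    assume h: "B - Y \<in> Dlow i"
    have "B - X = (B - Y) - (X - Y)" by (simp add: algebra_simps)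
    thus "B - X \<in> Dlow i" using Dlow_diff[OF h assms(3)] by simp
  qed
  thus ?thesis unfolding grcls_def by blast
qed

lemma grcls_eqD: assumes "X \<in> Dord i" "grcls i X = grcls i Y" shows "X - Y \<in> Dlow i"
proof -
  have "X \<in> grcls i Y" using grcls_self[OF assms(1)] assms(2) by simp
  thus ?thesis by (simp add: grcls_def)
qed

lemma grcls_add:
  assumes "X \<in> Dord i" "Y \<in> Dord i"
  shows "grcls i (X + Y) = {a + b | a b. a \<in> grcls i X \<and> b \<in> grcls i Y}"
proof
  show "grcls i (X + Y) \<subseteq> {a + b | a b. a \<in> grcls i X \<and> b \<in> grcls i Y}"
  proof
    fix B assume B: "B \<in> grcls i (X + Y)"
    have "B - Y \<in> grcls i X" using B assms by (auto simp: grcls_def Dord_diff algebra_simps)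
    moreover have "Y \<in> grcls i Y" by (rule grcls_self[OF assms(2)])
    ultimately show "B \<in> {a + b | a b. a \<in> grcls i X \<and> b \<in> grcls i Y}" by force
  qed
next
  show "{a + b | a b. a \<in> grcls i X \<and> b \<in> grcls i Y} \<subseteq> grcls i (X + Y)"
  proof
    fix B assume "B \<in> {a + b | a b. a \<in> grcls i X \<and> b \<in> grcls i Y}"
    then obtain a b where ab: "B = a + b" "a \<in> grcls i X" "b \<in> grcls i Y" by blast
    have "a - X + (b - Y) \<in> Dlow i" using ab by (simp add: grcls_def Dlow_add)
    moreover have "a - X + (b - Y) = B - (X + Y)" using ab by (simp add: algebra_simps)
    ultimately show "B \<in> grcls i (X + Y)" using ab by (simp add: grcls_def Dord_add)
  qed
qed

lemma opscale_diff: "opscale c (A - B) = opscale c A - opscale c B"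
  by (rule ext) (simp add: opscale_def cmul_diff)
lemma opscale_opscale: "opscale c (opscale d A) = opscale (c * d) A"
  by (rule ext) (simp add: opscale_def cmul_cmul)
lemma opscale_one: "opscale 1 A = A"
  by (rule ext) (simp add: opscale_def)

lemma grcls_scale:
  assumes "c \<noteq> 0" "X \<in> Dord i"
  shows "grcls i (opscale c X) = opscale c ` grcls i X"
proof
  show "opscale c ` grcls i X \<subseteq> grcls i (opscale c X)"
    by (auto simp: grcls_def Dord_opscale opscale_diff[symmetric] Dlow_opscale)
next
  show "grcls i (opscale c X) \<subseteq> opscale c ` grcls i X"
  proof
    fix B assume B: "B \<in> grcls i (opscale c X)"
    let ?B' = "opscale (inverse c) B"
    have "B = opscale c ?B'" using assms(1) by (simp add: opscale_opscale opscale_one)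
    moreover have "?B' - X = opscale (inverse c) (B - opscale c X)"
      using assms(1) by (simp add: opscale_diff opscale_opscale opscale_one)
    hence "?B' \<in> grcls i X" using B by (simp add: grcls_def Dord_opscale Dlow_opscale)
    ultimately show "B \<in> opscale c ` grcls i X" by blast
  qed
qed

lemma hom_part_Dord: "A \<in> Dord n \<Longrightarrow> i \<le> n \<Longrightarrow> hom_part n A i \<in> Dord i"
  using hom_part_spec(1) homog_ops_Dord by blast

lemma hom_part_add:
  assumes "A \<in> Dord n" "B \<in> Dord n" "i \<le> n"
  shows "hom_part n (A + B) i = hom_part n A i + hom_part n B i"
proof -
  have hA: "\<forall>k\<le>n. hom_part n A k \<in> homog_ops k" "A = (\<Sum>k\<le>n. hom_part n A k)"
    using hom_part_spec[OF assms(1)] by auto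
  have hB: "\<forall>k\<le>n. hom_part n B k \<in> homog_ops k" "B = (\<Sum>k\<le>n. hom_part n B k)"
    using hom_part_spec[OF assms(2)] by auto
  have h: "\<forall>k\<le>n. hom_part n A k + hom_part n B k \<in> homog_ops k"
    using hA hB by (simp add: homog_ops_add)
  have s: "A + B = (\<Sum>k\<le>n. hom_part n A k + hom_part n B k)"
    using hA(2) hB(2) by (simp add: sum.distrib)
  show ?thesis by (rule hom_part_unique[OF h s assms(3)])
qed

lemma hom_part_map:
  assumes A: "A \<in> Dord j" and i: "i \<le> j"
    and homog: "\<And>k H. H \<in> homog_ops k \<Longrightarrow> R H \<in> homog_ops k"
    and sum: "\<And>H. \<forall>k\<le>j. H k \<in> homog_ops k \<Longrightarrow> R (\<Sum>k\<le>j. H k) = (\<Sum>k\<le>j. R (H k))"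
  shows "hom_part j (R A) i = R (hom_part j A i)"
proof -
  have H: "\<forall>k\<le>j. hom_part j A k \<in> homog_ops k" "A = (\<Sum>k\<le>j. hom_part j A k)"
    using hom_part_spec[OF A] by auto
  have "R A = (\<Sum>k\<le>j. R (hom_part j A k))" using sum[OF H(1)] H(2) by simp
  thus ?thesis using H(1) homog i by (intro hom_part_unique) auto
qed

lemma Dord_map:
  assumes A: "A \<in> Dord j"
    and homog: "\<And>k H. H \<in> homog_ops k \<Longrightarrow> R H \<in> homog_ops k"
    and sum: "\<And>H. \<forall>k\<le>j. H k \<in> homog_ops k \<Longrightarrow> R (\<Sum>k\<le>j. H k) = (\<Sum>k\<le>j. R (H k))"
  shows "R A \<in> Dord j"
proof -
  obtain H where H: "\<forall>k\<le>j. H k \<in> homog_ops k" "A = (\<Sum>k\<le>j. H k)" using Dord_sumE[OF A] by blast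
  thus ?thesis using sum[OF H(1)] homog by (auto intro: Dord_sumI)
qed

lemma hom_part_opscale:
  assumes "A \<in> Dord n" "i \<le> n"
  shows "hom_part n (opscale c A) i = opscale c (hom_part n A i)"
  using assms by (rule hom_part_map[where R = "opscale c"]) (simp_all add: homog_ops_opscale opscale_sum)

lemma diff_top_hom_part_Dlow:
  assumes "B \<in> Dord i"
  shows "B - hom_part i B i \<in> Dlow i"
proof (cases i)
  case 0
  have "B = (\<Sum>k\<le>0. hom_part 0 B k)" using hom_part_spec(2)[OF assms] 0 by simp
  hence "B - hom_part i B i = 0" using 0 by simp
  thus ?thesis by (simp add: Dlow_zero)
next
  case (Suc i')
  have h: "\<forall>k\<le>i. hom_part i B k \<in> homog_ops k" "B = (\<Sum>k\<le>i. hom_part i B k)"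
    using hom_part_spec[OF assms] by auto
  have e: "(\<Sum>k\<le>i. hom_part i B k) = (\<Sum>k\<le>i'. hom_part i B k) + hom_part i B i"
    using Suc by (simp add: sum.atMost_Suc)
  have "B - hom_part i B i = (\<Sum>k\<le>i. hom_part i B k) - hom_part i B i"
    using h(2) by (rule arg_cong[where f="\<lambda>X. X - hom_part i B i"])
  also have "\<dots> = (\<Sum>k\<le>i'. hom_part i B k)" unfolding e by simp
  finally have "B - hom_part i B i = (\<Sum>k\<le>i'. hom_part i B k)" .
  moreover have "(\<Sum>k\<le>i'. hom_part i B k) \<in> Dord i'" using h(1) Suc by (intro Dord_sumI) simp
  ultimately show ?thesis using Suc by (simp add: Dlow_def)
qed

section \<open>Equivariance and parity of the decomposition\<close>

lemma aff_act_sum_homog_parts: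
  assumes "\<forall>k\<le>j. H k \<in> homog_ops k"
  shows "aff_act lam mu c1 c2 c3 c4 c5 (\<Sum>k\<le>j. H k) = (\<Sum>k\<le>j. aff_act lam mu c1 c2 c3 c4 c5 (H k))"
  using assms by (intro aff_act_sum) (auto intro: homog_ops_preserves_smooth)

lemma aff_act_Dord: "A \<in> Dord j \<Longrightarrow> aff_act lam mu c1 c2 c3 c4 c5 A \<in> Dord j"
  by (rule Dord_map[where R = "aff_act lam mu c1 c2 c3 c4 c5"])
     (simp_all add: aff_act_homog aff_act_sum_homog_parts)

lemma aff_act_Dlow: "A \<in> Dlow i \<Longrightarrow> aff_act lam mu c1 c2 c3 c4 c5 A \<in> Dlow i"
  unfolding Dlow_def by (cases "i = 0") (auto simp: aff_act_zero aff_act_Dord)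

lemma hom_part_aff_act:
  "A \<in> Dord j \<Longrightarrow> i \<le> j \<Longrightarrow>
    hom_part j (aff_act lam mu c1 c2 c3 c4 c5 A) i = aff_act lam mu c1 c2 c3 c4 c5 (hom_part j A i)"
  by (rule hom_part_map[where R = "aff_act lam mu c1 c2 c3 c4 c5"])
     (simp_all add: aff_act_homog aff_act_sum_homog_parts)

definition even_op :: "sop \<Rightarrow> sop" where "even_op A = restr (op_ev A)"
definition odd_op :: "sop \<Rightarrow> sop" where "odd_op A = restr (op_od A)"

lemma even_op_add: "even_op (A + B) = even_op A + even_op B"
  by (rule ext) (simp add: even_op_def restr_apply op_ev_add)
lemma odd_op_add: "odd_op (A + B) = odd_op A + odd_op B"
  by (rule ext) (simp add: odd_op_def restr_apply op_od_add)
lemma even_op_zero: "even_op 0 = 0" by (rule ext) (simp add: even_op_def restr_apply op_ev_zero)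
lemma odd_op_zero: "odd_op 0 = 0" by (rule ext) (simp add: odd_op_def restr_apply op_od_zero)


lemma even_op_sum: "even_op (\<Sum>x\<in>S. A x) = (\<Sum>x\<in>S. even_op (A x))"
  using sum_comp_morphism[of even_op A S, OF even_op_zero even_op_add] by (simp add: o_def)

lemma odd_op_sum: "odd_op (\<Sum>x\<in>S. A x) = (\<Sum>x\<in>S. odd_op (A x))"
  using sum_comp_morphism[of odd_op A S, OF odd_op_zero odd_op_add] by (simp add: o_def)

lemma even_op_term_op:
  assumes "m < 2" "n < 2"
  shows "even_op (term_op a l m n) = term_op (sf_part (m+n) a) l m n"
proof (rule ext)
  fix F show "even_op (term_op a l m n) F = term_op (sf_part (m+n) a) l m n F"
  proof (cases "smooth_sf F")
    case True thus ?thesis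
      using assms by (simp add: even_op_def restr_apply op_ev_term_op) (simp add: term_op_def restr_apply)
  qed (simp add: even_op_def restr_apply term_op_def)
qed
lemma odd_op_term_op:
  assumes "m < 2" "n < 2"
  shows "odd_op (term_op a l m n) = term_op (sf_part (Suc (m+n)) a) l m n"
proof (rule ext)
  fix F show "odd_op (term_op a l m n) F = term_op (sf_part (Suc (m+n)) a) l m n F"
  proof (cases "smooth_sf F")
    case True thus ?thesis
      using assms by (simp add: odd_op_def restr_apply op_od_term_op) (simp add: term_op_def restr_apply)
  qed (simp add: odd_op_def restr_apply term_op_def)
qed

lemma even_op_homog: assumes "H \<in> homog_ops i" shows "even_op H \<in> homog_ops i"
proof -
  obtain a where a: "H = hom_op i a" "\<forall>l m n. smooth_sf (a l m n)"
    using assms unfolding homog_ops_def by blast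
  have "even_op H = (\<Sum>l\<le>i. \<Sum>m<2. \<Sum>n<2. even_op (if 2*l+m+n = i then term_op (a l m n) l m n else 0))"
    unfolding a(1) hom_op_eq_sum_term_op by (simp only: even_op_sum)
  also have "\<dots> \<in> homog_ops i"
    using a(2) by (intro homog_ops_sum) (auto simp: even_op_zero homog_ops_zero even_op_term_op intro!: term_op_homog)
  finally show ?thesis .
qed

lemma odd_op_homog: assumes "H \<in> homog_ops i" shows "odd_op H \<in> homog_ops i"
proof -
  obtain a where a: "H = hom_op i a" "\<forall>l m n. smooth_sf (a l m n)"
    using assms unfolding homog_ops_def by blast
  have "odd_op H = (\<Sum>l\<le>i. \<Sum>m<2. \<Sum>n<2. odd_op (if 2*l+m+n = i then term_op (a l m n) l m n else 0))"
    unfolding a(1) hom_op_eq_sum_term_op by (simp only: odd_op_sum)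
  also have "\<dots> \<in> homog_ops i"
    using a(2) by (intro homog_ops_sum) (auto simp: odd_op_zero homog_ops_zero odd_op_term_op intro!: term_op_homog)
  finally show ?thesis .
qed

lemma even_op_eq_self:
  assumes "A \<in> Dord j" "op_even A"
  shows "even_op A = A"
proof (rule ext)
  fix F show "even_op A F = A F"
    using assms Dord_nonsmooth[OF assms(1), of F]
    by (cases "smooth_sf F") (simp_all add: even_op_def restr_apply op_even_def)
qed

lemma odd_op_eq_self:
  assumes "A \<in> Dord j" "op_odd A"
  shows "odd_op A = A"
proof (rule ext)
  fix F show "odd_op A F = A F"
    using assms Dord_nonsmooth[OF assms(1), of F]
    by (cases "smooth_sf F") (simp_all add: odd_op_def restr_apply op_odd_def)
qed

lemma op_even_hom_part:
  assumes A: "A \<in> Dord j" "op_even A" and i: "i \<le> j"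
  shows "op_even (hom_part j A i)"
proof -
  have "hom_part j (even_op A) i = even_op (hom_part j A i)"
    by (rule hom_part_map[OF A(1) i]) (simp_all add: even_op_homog even_op_sum)
  hence eq: "hom_part j A i = even_op (hom_part j A i)" by (simp add: even_op_eq_self[OF A])
  show ?thesis unfolding op_even_def
  proof (intro allI impI)
    fix F assume "smooth_sf F"
    thus "hom_part j A i F = op_ev (hom_part j A i) F"
      using fun_cong[OF eq, of F] by (simp add: even_op_def restr_apply)
  qed
qed

lemma op_odd_hom_part:
  assumes A: "A \<in> Dord j" "op_odd A" and i: "i \<le> j"
  shows "op_odd (hom_part j A i)"
proof -
  have "hom_part j (odd_op A) i = odd_op (hom_part j A i)"
    by (rule hom_part_map[OF A(1) i]) (simp_all add: odd_op_homog odd_op_sum)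
  hence eq: "hom_part j A i = odd_op (hom_part j A i)" by (simp add: odd_op_eq_self[OF A])
  show ?thesis unfolding op_odd_def
  proof (intro allI impI)
    fix F assume "smooth_sf F"
    thus "hom_part j A i F = op_od (hom_part j A i) F"
      using fun_cong[OF eq, of F] by (simp add: odd_op_def restr_apply)
  qed
qed

section \<open>The symbol map\<close>

definition symbol_map :: "nat \<Rightarrow> sop \<Rightarrow> nat \<Rightarrow> sop set" where
  "symbol_map n A i = (if i \<le> n then grcls i (hom_part n A i) else {})"

lemma hom_part_mem_symbol_map: "A \<in> Dord n \<Longrightarrow> i \<le> n \<Longrightarrow> hom_part n A i \<in> symbol_map n A i"
  by (simp add: symbol_map_def grcls_self hom_part_Dord)

lemma inj_on_symbol_map: "inj_on (symbol_map n) (Dord n)"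
proof (rule inj_onI)
  fix A B assume A: "A \<in> Dord n" and B: "B \<in> Dord n" and eq: "symbol_map n A = symbol_map n B"
  have "hom_part n A i = hom_part n B i" if i: "i \<le> n" for i
  proof -
    have "grcls i (hom_part n A i) = grcls i (hom_part n B i)"
      using fun_cong[OF eq, of i] i by (simp add: symbol_map_def)
    hence "hom_part n A i - hom_part n B i \<in> Dlow i" using hom_part_Dord[OF A i] by (rule grcls_eqD[rotated])
    moreover have "hom_part n A i - hom_part n B i \<in> homog_ops i"
      using hom_part_spec(1)[OF A] hom_part_spec(1)[OF B] i by (simp add: homog_ops_diff)
    ultimately have "hom_part n A i - hom_part n B i = 0" using homog_ops_Dlow_eq_zero by blast
    thus ?thesis by simp
  qed
  hence "(\<Sum>i\<le>n. hom_part n A i) = (\<Sum>i\<le>n. hom_part n B i)" by (intro sum.cong) auto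
  thus "A = B" using hom_part_spec(2)[OF A] hom_part_spec(2)[OF B] by simp
qed

text \<open>A preimage of a family of classes is the sum of the top homogeneous parts of representatives.\<close>

lemma symspace_subset_symbol_map_image: "g \<in> symspace n \<Longrightarrow> g \<in> symbol_map n ` Dord n"
proof -
  assume g: "g \<in> symspace n"
  hence "\<forall>i. \<exists>B. i \<le> n \<longrightarrow> B \<in> Dord i \<and> g i = grcls i B"
    unfolding symspace_def grspace_def by blast
  then obtain B where B: "\<And>i. i \<le> n \<Longrightarrow> B i \<in> Dord i \<and> g i = grcls i (B i)"
    by metis
  define G where "G i = hom_part i (B i) i" for i
  have G: "\<forall>i\<le>n. G i \<in> homog_ops i" using B hom_part_spec(1) by (simp add: G_def)
  define A where "A = (\<Sum>i\<le>n. G i)"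
  have "symbol_map n A i = g i" for i
  proof (cases "i \<le> n")
    case True
    have "B i - G i \<in> Dlow i" unfolding G_def using B True diff_top_hom_part_Dlow by blast
    hence "0 - (B i - G i) \<in> Dlow i" by (rule Dlow_diff[OF Dlow_zero])
    hence "G i - B i \<in> Dlow i" by simp
    hence "grcls i (G i) = grcls i (B i)" using G B True homog_ops_Dord by (intro grcls_eq) auto
    thus ?thesis using True B hom_part_unique[OF G A_def True] by (simp add: symbol_map_def)
  qed (use g in \<open>simp add: symbol_map_def symspace_def\<close>)
  moreover have "A \<in> Dord n" unfolding A_def using G by (rule Dord_sumI)
  ultimately show ?thesis by (metis ext image_eqI)
qed

lemma bij_betw_symbol_map: "bij_betw (symbol_map n) (Dord n) (symspace n)"
  unfolding bij_betw_def
proof (intro conjI inj_on_symbol_map equalityI subsetI)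
  show "g \<in> symspace n" if "g \<in> symbol_map n ` Dord n" for g
    using that hom_part_Dord by (auto simp: symbol_map_def symspace_def grspace_def)
qed (rule symspace_subset_symbol_map_image)

lemma symbol_map_add:
  "A \<in> Dord n \<Longrightarrow> B \<in> Dord n \<Longrightarrow> i \<le> n \<Longrightarrow>
    symbol_map n (A + B) i = {a + b | a b. a \<in> symbol_map n A i \<and> b \<in> symbol_map n B i}"
  by (simp add: symbol_map_def hom_part_add grcls_add hom_part_Dord)

lemma symbol_map_opscale:
  "c \<noteq> 0 \<Longrightarrow> A \<in> Dord n \<Longrightarrow> i \<le> n \<Longrightarrow> symbol_map n (opscale c A) i = opscale c ` symbol_map n A i"
  by (simp add: symbol_map_def hom_part_opscale grcls_scale hom_part_Dord)

lemma aff_act_mem_symbol_map: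
  assumes A: "A \<in> Dord n" and i: "i \<le> n" and B: "B \<in> symbol_map n A i"
  shows "aff_act lam mu c1 c2 c3 c4 c5 B \<in> symbol_map n (aff_act lam mu c1 c2 c3 c4 c5 A) i"
proof -
  let ?L = "aff_act lam mu c1 c2 c3 c4 c5"
  have B': "B \<in> Dord i" "B - hom_part n A i \<in> Dlow i"
    using B i by (auto simp: symbol_map_def grcls_def)
  have "?L B - ?L (hom_part n A i) = ?L (B - hom_part n A i)"
    using B'(1) hom_part_Dord[OF A i] by (simp add: aff_act_diff Dord_pres)
  hence "?L B - ?L (hom_part n A i) \<in> Dlow i" using aff_act_Dlow[OF B'(2)] by simp
  thus ?thesis using aff_act_Dord[OF B'(1)] i A by (simp add: symbol_map_def hom_part_aff_act grcls_def)
qed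

theorem corollary3p8:
  fixes lam mu :: complex and n :: nat
  shows "\<exists>\<Phi>. aff_module_iso lam mu n \<Phi>"
proof -
  have "aff_module_iso lam mu n (symbol_map n)"
    unfolding aff_module_iso_def
  proof (intro conjI ballI allI impI bij_betw_symbol_map symbol_map_add symbol_map_opscale)
    fix f A i B assume f: "f \<in> Aff22" and "A \<in> Dord n" "i \<le> n" "B \<in> symbol_map n A i"
    obtain c1 c2 c3 c4 c5 where "sf_ev f = aff_even c1 c2 c3" "sf_od f = aff_odd c4 c5"
      using Aff22_decompose[OF f] by metis
    thus "act lam mu f B \<in> symbol_map n (act lam mu f A) i"
      using aff_act_mem_symbol_map \<open>A \<in> Dord n\<close> \<open>i \<le> n\<close> \<open>B \<in> symbol_map n A i\<close>
      by (simp add: act_eq_aff_act)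
  next
    fix A i assume A: "A \<in> Dord n" and i: "i \<le> n"
    show "op_even A \<Longrightarrow> \<exists>B\<in>symbol_map n A i. op_even B"
      using hom_part_mem_symbol_map[OF A i] op_even_hom_part[OF A _ i] by blast
    show "op_odd A \<Longrightarrow> \<exists>B\<in>symbol_map n A i. op_odd B"
      using hom_part_mem_symbol_map[OF A i] op_odd_hom_part[OF A _ i] by blast
  qed
  thus ?thesis by blast
qed

end
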